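(* Under the standing assumptions and notation of the context, let $M=\begin{pmatrix}A & BR^{-1}B^*\\ Q & -A^*\end{pmatrix}$ on $X\times X$ with domain $D(A)\times D(A^* )$, and let $\mathcal T=\begin{pmatrix}\mathrm{id}&\mathrm{id}\\ -N&-P\end{pmatrix}\in L(X\times X)$. Then $\Delta=P-N$ is a boundedly invertible, selfadjoint, positive definite operator, $\mathcal T$ is boundedly invertible with $$\mathcal T^{-1}=\begin{pmatrix}\Delta^{-1}P&\Delta^{-1}\\ -\Delta^{-1}N&-\Delta^{-1}\end{pmatrix},$$ and $$\mathcal T^{-1}M\mathcal T=\begin{pmatrix}A_+&0\\0&A_-\end{pmatrix}.$$ Moreover $\Delta A_-+A_+^*\Delta=0$, so that the spectrum of $A_-$ is the negative of the spectrum of $A_+$.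
   Context: Let $X,U$ be real Hilbert spaces (identified with their duals). Let $A:D(A)\to X$ generate a $C_0$ group $(e^{tA})_{t\in\mathbb R}$ on $X$, let $B\in L(U,X)$, and let $Q\in L(X)$, $R\in L(U)$ be selfadjoint, positive definite and boundedly invertible. Assume exact controllability: there is $T_0>0$ such that for every $T>T_0$ the system $\dot y=Ay+Bu$ is exactly controllable in $X$ in time $T$ with controls $u\in L^2([0,T],U)$. Riccati operators: $P\in L(X)$ is the unique nonnegative selfadjoint solution of the algebraic Riccati equation $A^*\mathtt X+\mathtt XA-\mathtt XBR^{-1}B^*\mathtt X=-Q$ (it is positive definite and boundedly invertible), and $N\in L(X)$ is the unique nonpositive selfadjoint solution of the same equation (negative definite and boundedly invertible). Set $A_-=A-BR^{-1}B^*P$ and $A_+=A-BR^{-1}B^*N$, both with domain $D(A)$. *)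

theory Defs
  imports "HOL-Analysis.Analysis"
begin

definition is_badjoint :: "('a::real_inner \<Rightarrow>\<^sub>L 'b::real_inner) \<Rightarrow> ('b \<Rightarrow>\<^sub>L 'a) \<Rightarrow> bool" where
  "is_badjoint S Sa \<longleftrightarrow> (\<forall>x y. inner (blinfun_apply S x) y = inner x (blinfun_apply Sa y))"

definition selfadjoint_op :: "('a::real_inner \<Rightarrow>\<^sub>L 'a) \<Rightarrow> bool" where
  "selfadjoint_op S \<longleftrightarrow> is_badjoint S S"

definition posdef_op :: "('a::real_inner \<Rightarrow>\<^sub>L 'a) \<Rightarrow> bool" where
  "posdef_op S \<longleftrightarrow> (\<forall>x. x \<noteq> 0 \<longrightarrow> inner (blinfun_apply S x) x > 0)"

definition nonneg_op :: "('a::real_inner \<Rightarrow>\<^sub>L 'a) \<Rightarrow> bool" where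
  "nonneg_op S \<longleftrightarrow> (\<forall>x. inner (blinfun_apply S x) x \<ge> 0)"

definition nonpos_op :: "('a::real_inner \<Rightarrow>\<^sub>L 'a) \<Rightarrow> bool" where
  "nonpos_op S \<longleftrightarrow> (\<forall>x. inner (blinfun_apply S x) x \<le> 0)"

definition negdef_op :: "('a::real_inner \<Rightarrow>\<^sub>L 'a) \<Rightarrow> bool" where
  "negdef_op S \<longleftrightarrow> (\<forall>x. x \<noteq> 0 \<longrightarrow> inner (blinfun_apply S x) x < 0)"

definition is_binverse :: "('a::real_normed_vector \<Rightarrow>\<^sub>L 'b::real_normed_vector) \<Rightarrow> ('b \<Rightarrow>\<^sub>L 'a) \<Rightarrow> bool" where
  "is_binverse S Si \<longleftrightarrow> Si o\<^sub>L S = id_blinfun \<and> S o\<^sub>L Si = id_blinfun"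

definition binvertible :: "('a::real_normed_vector \<Rightarrow>\<^sub>L 'b::real_normed_vector) \<Rightarrow> bool" where
  "binvertible S \<longleftrightarrow> (\<exists>Si. is_binverse S Si)"

definition c0_group :: "(real \<Rightarrow> ('a::real_normed_vector \<Rightarrow>\<^sub>L 'a)) \<Rightarrow> bool" where
  "c0_group G \<longleftrightarrow> G 0 = id_blinfun \<and> (\<forall>s t. G (s + t) = G s o\<^sub>L G t)
     \<and> (\<forall>x. continuous_on UNIV (\<lambda>t. blinfun_apply (G t) x))"

text \<open>An (unbounded) operator is a pair of a domain and a function (whose values
outside the domain are irrelevant).  The generator is defined by the usual
one-sided difference quotient at 0.\<close>

definition is_generator :: "(real \<Rightarrow> ('a::real_normed_vector \<Rightarrow>\<^sub>L 'a)) \<Rightarrow> 'a set \<Rightarrow> ('a \<Rightarrow> 'a) \<Rightarrow> bool" where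
  "is_generator G D A \<longleftrightarrow>
     D = {x. \<exists>y. ((\<lambda>h. (1/h) *\<^sub>R (blinfun_apply (G h) x - x)) \<longlongrightarrow> y) (at_right 0)}
     \<and> (\<forall>x\<in>D. ((\<lambda>h. (1/h) *\<^sub>R (blinfun_apply (G h) x - x)) \<longlongrightarrow> A x) (at_right 0))"

definition adj_dom :: "'a::real_inner set \<Rightarrow> ('a \<Rightarrow> 'a) \<Rightarrow> 'a set" where
  "adj_dom D A = {y. \<exists>z. \<forall>x\<in>D. inner (A x) y = inner x z}"

definition adj_op :: "'a::real_inner set \<Rightarrow> ('a \<Rightarrow> 'a) \<Rightarrow> 'a \<Rightarrow> 'a" where
  "adj_op D A y = (SOME z. \<forall>x\<in>D. inner (A x) y = inner x z)"

text \<open>Controls in L^2([0,T],U): (Lebesgue-)measurable, separably valued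
(so strongly measurable, by Pettis), with square integrable norm.  The final
state of the mild solution uses the Henstock-Kurzweil integral, which agrees
with the Bochner integral for such integrands.\<close>

definition L2_control :: "real \<Rightarrow> (real \<Rightarrow> 'u::real_normed_vector) \<Rightarrow> bool" where
  "L2_control T u \<longleftrightarrow> u \<in> borel_measurable (lebesgue_on {0..T})
     \<and> (\<exists>C. countable C \<and> u ` {0..T} \<subseteq> closure C)
     \<and> integrable (lebesgue_on {0..T}) (\<lambda>s. (norm (u s))\<^sup>2)"

definition exactly_controllable ::
  "(real \<Rightarrow> ('x::real_normed_vector \<Rightarrow>\<^sub>L 'x)) \<Rightarrow> ('u::real_normed_vector \<Rightarrow>\<^sub>L 'x) \<Rightarrow> real \<Rightarrow> bool" where
  "exactly_controllable G B T \<longleftrightarrow>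
     (\<forall>x0 x1. \<exists>u v. L2_control T u
        \<and> ((\<lambda>s. blinfun_apply (G (T - s)) (blinfun_apply B (u s))) has_integral v) {0..T}
        \<and> x1 = blinfun_apply (G T) x0 + v)"

definition riccati_sol ::
  "'x::real_inner set \<Rightarrow> ('x \<Rightarrow> 'x) \<Rightarrow> ('u::real_inner \<Rightarrow>\<^sub>L 'x) \<Rightarrow> ('x \<Rightarrow>\<^sub>L 'u) \<Rightarrow> ('u \<Rightarrow>\<^sub>L 'u)
    \<Rightarrow> ('x \<Rightarrow>\<^sub>L 'x) \<Rightarrow> ('x \<Rightarrow>\<^sub>L 'x) \<Rightarrow> bool" where
  "riccati_sol D A B Bs Ri Q Y \<longleftrightarrow>
     (\<forall>x\<in>D. \<forall>y\<in>D. inner (blinfun_apply Y (A x)) y + inner (blinfun_apply Y x) (A y)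
        - inner (blinfun_apply Y (blinfun_apply B (blinfun_apply Ri (blinfun_apply Bs (blinfun_apply Y x))))) y
        = - inner (blinfun_apply Q x) y)"

definition closed_loop ::
  "('x::real_normed_vector \<Rightarrow> 'x) \<Rightarrow> ('u::real_normed_vector \<Rightarrow>\<^sub>L 'x) \<Rightarrow> ('x \<Rightarrow>\<^sub>L 'u) \<Rightarrow> ('u \<Rightarrow>\<^sub>L 'u)
    \<Rightarrow> ('x \<Rightarrow>\<^sub>L 'x) \<Rightarrow> 'x \<Rightarrow> 'x" where
  "closed_loop A B Bs Ri Y x = A x - blinfun_apply B (blinfun_apply Ri (blinfun_apply Bs (blinfun_apply Y x)))"

definition hamiltonian ::
  "'x::real_inner set \<Rightarrow> ('x \<Rightarrow> 'x) \<Rightarrow> ('u::real_inner \<Rightarrow>\<^sub>L 'x) \<Rightarrow> ('x \<Rightarrow>\<^sub>L 'u) \<Rightarrow> ('u \<Rightarrow>\<^sub>L 'u)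
    \<Rightarrow> ('x \<Rightarrow>\<^sub>L 'x) \<Rightarrow> 'x \<times> 'x \<Rightarrow> 'x \<times> 'x" where
  "hamiltonian D A B Bs Ri Q z =
     (A (fst z) + blinfun_apply B (blinfun_apply Ri (blinfun_apply Bs (snd z))),
      blinfun_apply Q (fst z) - adj_op D A (snd z))"

definition hamiltonian_dom :: "'x::real_inner set \<Rightarrow> ('x \<Rightarrow> 'x) \<Rightarrow> ('x \<times> 'x) set" where
  "hamiltonian_dom D A = D \<times> adj_dom D A"

definition Tmat :: "('x::real_normed_vector \<Rightarrow>\<^sub>L 'x) \<Rightarrow> ('x \<Rightarrow>\<^sub>L 'x) \<Rightarrow> 'x \<times> 'x \<Rightarrow> 'x \<times> 'x" where
  "Tmat N P z = (fst z + snd z, - blinfun_apply N (fst z) - blinfun_apply P (snd z))"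

definition Tinv_mat :: "('x::real_normed_vector \<Rightarrow>\<^sub>L 'x) \<Rightarrow> ('x \<Rightarrow>\<^sub>L 'x) \<Rightarrow> ('x \<Rightarrow>\<^sub>L 'x) \<Rightarrow> 'x \<times> 'x \<Rightarrow> 'x \<times> 'x" where
  "Tinv_mat Di N P z =
     (blinfun_apply Di (blinfun_apply P (fst z)) + blinfun_apply Di (snd z),
      - blinfun_apply Di (blinfun_apply N (fst z)) - blinfun_apply Di (snd z))"

text \<open>Via the complexification X_C = X \<times> X (pairs (x,y) meaning x + i y); the
complexified operator has domain D \<times> D.  lambda - A_C acting on (x,y):\<close>

definition cshift_op :: "('x::real_normed_vector \<Rightarrow> 'x) \<Rightarrow> complex \<Rightarrow> 'x \<times> 'x \<Rightarrow> 'x \<times> 'x" where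
  "cshift_op A l z =
     (Re l *\<^sub>R fst z - Im l *\<^sub>R snd z - A (fst z),
      Im l *\<^sub>R fst z + Re l *\<^sub>R snd z - A (snd z))"

definition in_resolvent :: "'x::real_normed_vector set \<Rightarrow> ('x \<Rightarrow> 'x) \<Rightarrow> complex \<Rightarrow> bool" where
  "in_resolvent D A l \<longleftrightarrow>
     (\<exists>Rl :: ('x \<times> 'x) \<Rightarrow>\<^sub>L ('x \<times> 'x).
        (\<forall>z. blinfun_apply Rl z \<in> D \<times> D \<and> cshift_op A l (blinfun_apply Rl z) = z)
        \<and> (\<forall>w\<in>D \<times> D. blinfun_apply Rl (cshift_op A l w) = w))"

definition op_spectrum :: "'x::real_normed_vector set \<Rightarrow> ('x \<Rightarrow> 'x) \<Rightarrow> complex set" where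
  "op_spectrum D A = {l. \<not> in_resolvent D A l}"

end

theory Submission
  imports Defs
begin

text \<open>Subtracting the Riccati equations for P and N shows that \<Delta> = P - N satisfies
  \<Delta> A_- + A_+^* \<Delta> = 0 weakly on D(A); \<Delta> is coercive, because P is (being nonnegative and
  invertible) and N \<le> 0, hence boundedly invertible. Everything else is read off this identity.
  It puts \<Delta> D(A) into D(A_+^*); and since \<lambda> \<plusminus> A_\<plusminus> map D(A) onto X for large \<lambda> (a
  generator of a C0 group has both half-lines in its resolvent set, and bounded perturbations keep
  this), \<Delta>^{-1} maps D(A_\<plusminus>^*) back into D(A). This identifies the domain of T^{-1} M T, whose
  block form then follows from the Riccati equations alone. In the complexification the identity
  turns a resolvent of A_+ at \<lambda> into one of A_- at -\<lambda> and conversely, so \<sigma>(A_-) = -\<sigma>(A_+).\<close>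

section \<open>Uniform boundedness\<close>

lemma norm_blinfun_le_of_bounded_on_ball:
  fixes T :: "'a::real_normed_vector \<Rightarrow>\<^sub>L 'b::real_normed_vector"
  assumes r: "r > 0" and bound: "\<And>x. x \<in> ball x0 r \<Longrightarrow> norm (T x) \<le> C"
  shows "norm T \<le> 4 * C / r"
proof (rule norm_blinfun_bound)
  have "0 \<le> C" using bound[of x0] r by (meson centre_in_ball norm_ge_zero order_trans)
  then show "0 \<le> 4 * C / r" using r by simp
  fix y :: 'a
  show "norm (T y) \<le> 4 * C / r * norm y"
  proof (cases "y = 0")
    case False
    define z where "z = (r / 2 / norm y) *\<^sub>R y"
    have "norm z = r / 2" using False r by (simp add: z_def)
    then have "norm (T (x0 + z)) \<le> C" "norm (T x0) \<le> C" using r by (auto intro!: bound simp: dist_norm)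
    then have Tz: "norm (T z) \<le> 2 * C"
      using norm_triangle_ineq4[of "T (x0 + z)" "T x0"] by (simp add: blinfun.add_right)
    have "T y = (2 * norm y / r) *\<^sub>R T z" using False r by (simp add: z_def blinfun.scaleR_right)
    then have "norm (T y) = (2 * norm y / r) * norm (T z)" using r by simp
    also have "\<dots> \<le> (2 * norm y / r) * (2 * C)" using Tz r by (intro mult_left_mono) auto
    finally show ?thesis by (simp add: field_simps)
  qed simp
qed

theorem uniform_boundedness:
  fixes T :: "'i \<Rightarrow> ('a::{real_normed_vector,complete_space} \<Rightarrow>\<^sub>L 'b::real_normed_vector)"
  assumes pointwise_bounded: "\<And>x. \<exists>C. \<forall>i\<in>I. norm (T i x) \<le> C"
  shows "\<exists>M. \<forall>i\<in>I. norm (T i) \<le> M"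
proof -
  define F where "F n = (\<Inter>i\<in>I. {x. norm (T i x) \<le> real n})" for n :: nat
  have closed_F: "closed (F n)" for n
    unfolding F_def by (intro closed_INT ballI closed_Collect_le continuous_intros)
  have covers: "(\<Union>n. F n) = UNIV"
  proof -
    have "\<exists>n. x \<in> F n" for x
    proof -
      obtain C where "\<forall>i\<in>I. norm (T i x) \<le> C" using pointwise_bounded by blast
      moreover obtain n :: nat where "C \<le> real n" using real_arch_simple by blast
      ultimately show ?thesis by (intro exI[of _ n]) (auto simp: F_def intro: order_trans)
    qed
    then show ?thesis by blast
  qed
  have "\<exists>n. interior (F n) \<noteq> {}"
  proof (rule ccontr)
    assume "\<not> ?thesis"
    then have "euclidean interior_of (\<Union>n. F n) = {}"
      by (intro Baire_category_alt) (auto simp: completely_metrizable_space_euclidean closed_F)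
    with covers show False by simp
  qed
  then obtain n x0 where "x0 \<in> interior (F n)" by blast
  then obtain r where r: "r > 0" "ball x0 r \<subseteq> F n"
    using open_contains_ball_eq open_interior interior_subset by (metis subset_trans)
  have "norm (T i) \<le> 4 * real n / r" if "i \<in> I" for i
    using r that by (intro norm_blinfun_le_of_bounded_on_ball) (auto simp: F_def)
  then show ?thesis by blast
qed

section \<open>Strongly continuous groups\<close>

lemma c0_groupD:
  assumes "c0_group G"
  shows "G 0 x = x" "G s (G t x) = G (s + t) x" "continuous_on UNIV (\<lambda>t. G t x)"
  using assms by (simp_all add: c0_group_def)

lemma c0_group_bounded_on_interval:
  fixes G :: "real \<Rightarrow> ('a::{real_normed_vector,complete_space} \<Rightarrow>\<^sub>L 'a)"
  assumes "c0_group G"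
  shows "\<exists>M. \<forall>t\<in>{a..b}. norm (G t) \<le> M"
proof (rule uniform_boundedness)
  fix x
  have "compact ((\<lambda>t. G t x) ` {a..b})"
    by (rule compact_continuous_image[OF continuous_on_subset[OF c0_groupD(3)[OF assms] subset_UNIV]])
      simp
  then have "bounded ((\<lambda>t. G t x) ` {a..b})" by (rule compact_imp_bounded)
  then show "\<exists>C. \<forall>t\<in>{a..b}. norm (G t x) \<le> C" unfolding bounded_iff by auto
qed

lemma c0_group_tendsto_apply:
  fixes G :: "real \<Rightarrow> ('a::{real_normed_vector,complete_space} \<Rightarrow>\<^sub>L 'a)"
  assumes G: "c0_group G" and s: "(s \<longlongrightarrow> 0) F" and g: "(g \<longlongrightarrow> y) F"
  shows "((\<lambda>h. G (s h) (g h)) \<longlongrightarrow> y) F"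
proof -
  obtain M where M: "\<forall>t\<in>{-1..1}. norm (G t) \<le> M"
    using c0_group_bounded_on_interval[OF G] by blast
  have "\<forall>\<^sub>F h in F. -1 < s h" "\<forall>\<^sub>F h in F. s h < 1"
    by (rule order_tendstoD[OF s]; simp)+
  then have "\<forall>\<^sub>F h in F. norm (G (s h) (g h - y)) \<le> M * norm (g h - y)"
  proof eventually_elim
    case (elim h)
    then have "norm (G (s h)) \<le> M" using M by auto
    then show ?case
      using norm_blinfun[of "G (s h)" "g h - y"] mult_right_mono norm_ge_zero order_trans by blast
  qed
  moreover have "((\<lambda>h. M * norm (g h - y)) \<longlongrightarrow> 0) F"
    using tendsto_mult[OF tendsto_const tendsto_norm_zero[OF LIM_zero[OF g]], of M] by simp
  ultimately have "((\<lambda>h. G (s h) (g h - y)) \<longlongrightarrow> 0) F"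
    by (rule Lim_null_comparison)
  moreover have "((\<lambda>h. G (s h) y) \<longlongrightarrow> y) F"
    using isCont_tendsto_compose[OF _ s, of "\<lambda>t. G t y"] c0_groupD[OF G]
    by (simp add: continuous_on_eq_continuous_at)
  ultimately have "((\<lambda>h. G (s h) (g h - y) + G (s h) y) \<longlongrightarrow> 0 + y) F"
    by (rule tendsto_add)
  then show ?thesis by (simp add: blinfun.diff_right)
qed

lemma c0_group_reverse:
  assumes "c0_group G"
  shows "c0_group (\<lambda>t. G (- t))"
  unfolding c0_group_def
proof (intro conjI allI)
  show "G (- 0) = id_blinfun" using assms by (simp add: c0_group_def)
  show "G (- (s + t)) = G (- s) o\<^sub>L G (- t)" for s t
    using assms unfolding c0_group_def by (metis minus_add_distrib)
  show "continuous_on UNIV (\<lambda>t. G (- t) x)" for x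
    using c0_groupD(3)[OF assms]
    by (rule continuous_on_compose2[OF _ continuous_on_minus[OF continuous_on_id]]) auto
qed

lemma c0_group_reverse_quotient_tendsto:
  fixes G :: "real \<Rightarrow> ('a::{real_normed_vector,complete_space} \<Rightarrow>\<^sub>L 'a)"
  assumes G: "c0_group G" and lim: "((\<lambda>h. (1/h) *\<^sub>R (G h x - x)) \<longlongrightarrow> y) (at_right 0)"
  shows "((\<lambda>h. (1/h) *\<^sub>R (G (- h) x - x)) \<longlongrightarrow> - y) (at_right 0)"
proof -
  have "G (- h) ((1/h) *\<^sub>R (G h x - x)) = (1/h) *\<^sub>R (x - G (- h) x)" for h
    using c0_groupD(1,2)[OF G] by (simp add: blinfun.scaleR_right blinfun.diff_right)
  then have "(1/h) *\<^sub>R (G (- h) x - x) = - G (- h) ((1/h) *\<^sub>R (G h x - x))" for h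
    by (metis minus_diff_eq scaleR_minus_right)
  moreover have "((\<lambda>h. - G (- h) ((1/h) *\<^sub>R (G h x - x))) \<longlongrightarrow> - y) (at_right 0)"
    by (intro tendsto_minus c0_group_tendsto_apply[OF G _ lim] tendsto_eq_intros) auto
  ultimately show ?thesis by simp
qed

lemma is_generator_reverse:
  fixes G :: "real \<Rightarrow> ('a::{real_normed_vector,complete_space} \<Rightarrow>\<^sub>L 'a)"
  assumes G: "c0_group G" and gen: "is_generator G D A"
  shows "is_generator (\<lambda>t. G (- t)) D (\<lambda>x. - A x)"
proof -
  have "(\<exists>y. ((\<lambda>h. (1/h) *\<^sub>R (G (- h) x - x)) \<longlongrightarrow> y) (at_right 0))
      \<longleftrightarrow> (\<exists>y. ((\<lambda>h. (1/h) *\<^sub>R (G h x - x)) \<longlongrightarrow> y) (at_right 0))" for x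
    using c0_group_reverse_quotient_tendsto[OF G, of x]
      c0_group_reverse_quotient_tendsto[OF c0_group_reverse[OF G], of x]
    by (simp, blast)
  then show ?thesis
    using gen c0_group_reverse_quotient_tendsto[OF G] by (auto simp: is_generator_def)
qed

locale c0_generator =
  fixes G :: "real \<Rightarrow> ('a::real_normed_vector \<Rightarrow>\<^sub>L 'a)" and D :: "'a set" and A :: "'a \<Rightarrow> 'a"
  assumes group: "c0_group G" and generator: "is_generator G D A"
begin

lemma generator_tendsto: "x \<in> D \<Longrightarrow> ((\<lambda>h. (1/h) *\<^sub>R (G h x - x)) \<longlongrightarrow> A x) (at_right 0)"
  using generator by (simp add: is_generator_def)

lemma generatorI:
  assumes "((\<lambda>h. (1/h) *\<^sub>R (G h x - x)) \<longlongrightarrow> y) (at_right 0)"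
  shows "x \<in> D" "A x = y"
proof -
  show x: "x \<in> D" using generator assms by (auto simp: is_generator_def)
  show "A x = y" using tendsto_unique[OF _ generator_tendsto[OF x] assms] by simp
qed

lemma zero_in_domain: "0 \<in> D" "A 0 = 0"
  using generatorI[of 0 0] by simp_all

lemma domain_add:
  assumes "x \<in> D" "y \<in> D"
  shows "x + y \<in> D" "A (x + y) = A x + A y"
proof -
  have "((\<lambda>h. (1/h) *\<^sub>R (G h x - x) + (1/h) *\<^sub>R (G h y - y)) \<longlongrightarrow> A x + A y) (at_right 0)"
    by (intro tendsto_add generator_tendsto assms)
  then have "((\<lambda>h. (1/h) *\<^sub>R (G h (x + y) - (x + y))) \<longlongrightarrow> A x + A y) (at_right 0)"
    by (simp add: blinfun.add_right algebra_simps scaleR_add_right)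
  then show "x + y \<in> D" "A (x + y) = A x + A y" using generatorI by blast+
qed

lemma domain_scaleR:
  assumes "x \<in> D"
  shows "c *\<^sub>R x \<in> D" "A (c *\<^sub>R x) = c *\<^sub>R A x"
proof -
  have "((\<lambda>h. c *\<^sub>R ((1/h) *\<^sub>R (G h x - x))) \<longlongrightarrow> c *\<^sub>R A x) (at_right 0)"
    by (intro tendsto_scaleR tendsto_const generator_tendsto assms)
  then have "((\<lambda>h. (1/h) *\<^sub>R (G h (c *\<^sub>R x) - c *\<^sub>R x)) \<longlongrightarrow> c *\<^sub>R A x) (at_right 0)"
    by (simp add: blinfun.scaleR_right algebra_simps scaleR_diff_right)
  then show "c *\<^sub>R x \<in> D" "A (c *\<^sub>R x) = c *\<^sub>R A x" using generatorI by blast+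
qed

lemma domain_uminus: "x \<in> D \<Longrightarrow> - x \<in> D"
  using domain_scaleR(1)[of x "-1"] by simp

lemma domain_diff: "x \<in> D \<Longrightarrow> y \<in> D \<Longrightarrow> x - y \<in> D"
  using domain_add(1)[of x "- y"] domain_uminus by simp

end

section \<open>Generators are densely defined and have resolvents\<close>

lemma has_vector_derivative_right_quotient:
  fixes F :: "real \<Rightarrow> 'a::real_normed_vector"
  assumes d: "(F has_vector_derivative v) (at u within {a..b})" and "a \<le> u" "u < b"
  shows "((\<lambda>h. (1/h) *\<^sub>R (F (u + h) - F u)) \<longlongrightarrow> v) (at_right 0)"
proof -
  have "(F has_vector_derivative v) (at u within {u..b})"
    by (rule has_vector_derivative_within_subset[OF d]) (use assms in auto)
  then have "(F has_vector_derivative v) (at_right u)"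
    using at_within_Icc_at_right[OF \<open>u < b\<close>] by simp
  then have "((\<lambda>y. norm (F y - F u - (y - u) *\<^sub>R v) / norm (y - u)) \<longlongrightarrow> 0) (at_right u)"
    by (simp add: has_vector_derivative_def has_derivative_iff_norm)
  moreover have "\<forall>\<^sub>F y in at_right u. norm (F y - F u - (y - u) *\<^sub>R v) / norm (y - u)
      = norm ((1/(y - u)) *\<^sub>R (F y - F u) - v)"
  proof (rule eventually_mono[OF eventually_at_right_less])
    fix y assume "u < y"
    then have "(1/(y - u)) *\<^sub>R (F y - F u) - v = (1/(y - u)) *\<^sub>R (F y - F u - (y - u) *\<^sub>R v)"
      by (simp add: scaleR_diff_right)
    then show "norm (F y - F u - (y - u) *\<^sub>R v) / norm (y - u) = norm ((1/(y - u)) *\<^sub>R (F y - F u) - v)"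
      using \<open>u < y\<close> by (simp add: divide_inverse mult.commute)
  qed
  ultimately have "((\<lambda>y. norm ((1/(y - u)) *\<^sub>R (F y - F u) - v)) \<longlongrightarrow> 0) (at_right u)"
    using tendsto_cong by fastforce
  then have "((\<lambda>y. (1/(y - u)) *\<^sub>R (F y - F u)) \<longlongrightarrow> v) (at_right u)"
    using tendsto_norm_zero_iff LIM_zero_cancel by blast
  then show ?thesis
    by (subst (asm) filterlim_at_right_to_0) (simp add: add.commute)
qed

lemma exp_right_quotient_tendsto:
  fixes l :: real
  shows "((\<lambda>h. (exp (l * h) - 1) / h) \<longlongrightarrow> l) (at_right 0)"
proof -
  have "((\<lambda>h. exp (l * h)) has_field_derivative l) (at 0)"
    by (auto intro!: derivative_eq_intros)
  then have "((\<lambda>h. (exp (l * h) - exp (l * 0)) / (h - 0)) \<longlongrightarrow> l) (at 0)"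
    by (simp add: has_field_derivative_iff)
  then show ?thesis by (simp add: filterlim_at_split)
qed

definition partial_laplace :: "(real \<Rightarrow> ('a::real_normed_vector \<Rightarrow>\<^sub>L 'a)) \<Rightarrow> real \<Rightarrow> 'a \<Rightarrow> real \<Rightarrow> 'a"
  where "partial_laplace G l x t = integral {0..t} (\<lambda>s. exp (- l * s) *\<^sub>R G s x)"

locale banach_c0_generator = c0_generator G D A
  for G :: "real \<Rightarrow> ('a::banach \<Rightarrow>\<^sub>L 'a)" and D A
begin

lemma laplace_integrand_continuous: "continuous_on UNIV (\<lambda>s. exp (- l * s) *\<^sub>R G s x)"
  by (rule continuous_on_scaleR[OF _ c0_groupD(3)[OF group]]) (intro continuous_intros)

lemma laplace_integrand_integrable: "(\<lambda>s. exp (- l * s) *\<^sub>R G s x) integrable_on {a..b}"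
  by (rule integrable_continuous_real[OF continuous_on_subset[OF laplace_integrand_continuous subset_UNIV]])

lemma partial_laplace_right_quotient:
  assumes "0 \<le> u"
  shows "((\<lambda>h. (1/h) *\<^sub>R (partial_laplace G l x (u + h) - partial_laplace G l x u))
    \<longlongrightarrow> exp (- l * u) *\<^sub>R G u x) (at_right 0)"
  unfolding partial_laplace_def
  by (rule has_vector_derivative_right_quotient[OF integral_has_vector_derivative[OF
        continuous_on_subset[OF laplace_integrand_continuous subset_UNIV], of u 0 "u + 1"]])
    (use assms in auto)

lemma partial_laplace_continuous_right:
  assumes "0 \<le> u"
  shows "((\<lambda>h. partial_laplace G l x (u + h)) \<longlongrightarrow> partial_laplace G l x u) (at_right 0)"
proof -
  let ?F = "partial_laplace G l x"
  have "((\<lambda>h. ?F u + h *\<^sub>R ((1/h) *\<^sub>R (?F (u + h) - ?F u))) \<longlongrightarrow> ?F u + 0 *\<^sub>R (exp (- l * u) *\<^sub>R G u x)) (at_right 0)"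
    by (intro tendsto_intros partial_laplace_right_quotient assms)
  moreover have "\<forall>\<^sub>F h in at_right 0. ?F u + h *\<^sub>R ((1/h) *\<^sub>R (?F (u + h) - ?F u)) = ?F (u + h)"
    by (rule eventually_mono[OF eventually_at_right_less]) simp
  ultimately show ?thesis using tendsto_cong by fastforce
qed

lemma partial_laplace_shift:
  assumes h: "0 \<le> h" and t: "0 \<le> t"
  shows "G h (partial_laplace G l x t)
    = exp (l * h) *\<^sub>R (partial_laplace G l x (t + h) - partial_laplace G l x h)"
proof -
  define f where "f = (\<lambda>s. exp (- l * s) *\<^sub>R G s x)"
  have "G h (partial_laplace G l x t) = integral {0..t} (\<lambda>s. G h (f s))"
    unfolding partial_laplace_def f_def
    by (rule integral_linear[OF laplace_integrand_integrable blinfun.bounded_linear_right, symmetric,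
          unfolded o_def])
  also have "\<dots> = integral {0..t} (\<lambda>s. exp (l * h) *\<^sub>R f (h + s))"
  proof (rule integral_cong)
    fix s
    have "exp (l * h) * exp (- l * (h + s)) = exp (- l * s)"
      by (simp add: algebra_simps flip: exp_add)
    then show "G h (f s) = exp (l * h) *\<^sub>R f (h + s)"
      using c0_groupD(2)[OF group] by (simp add: f_def blinfun.scaleR_right)
  qed
  also have "\<dots> = exp (l * h) *\<^sub>R integral {h..t + h} f"
    using integral_shift_Icc_real[of 0 t f h, unfolded comp_def] by simp
  also have "integral {h..t + h} f = partial_laplace G l x (t + h) - partial_laplace G l x h"
  proof -
    have "integral {0..h} f + integral {h..t + h} f = integral {0..t + h} f"
      using h t laplace_integrand_integrable[of l x 0 "t + h"] unfolding f_def
      by (intro Henstock_Kurzweil_Integration.integral_combine) auto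
    then show ?thesis
      unfolding partial_laplace_def f_def[symmetric] by (metis add_diff_cancel_left')
  qed
  finally show ?thesis .
qed

lemma partial_laplace_in_domain:
  assumes t: "0 < t"
  shows "partial_laplace G l x t \<in> D"
    "A (partial_laplace G l x t) = l *\<^sub>R partial_laplace G l x t - x + exp (- l * t) *\<^sub>R G t x"
proof -
  let ?F = "partial_laplace G l x"
  \<comment> \<open>By the shift identity the difference quotient of G at F(t) splits into three terms with
    known limits.\<close>
  have split: "(1/h) *\<^sub>R (G h (?F t) - ?F t) = ((exp (l * h) - 1) / h) *\<^sub>R (?F (t + h) - ?F (0 + h))
      + ((1/h) *\<^sub>R (?F (t + h) - ?F t) - (1/h) *\<^sub>R (?F (0 + h) - ?F 0))" if "h > 0" for h
  proof -
    define E a b c where "E = exp (l * h)" and "a = ?F (t + h)" and "b = ?F h" and "c = ?F t"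
    have "((E - 1) / h) *\<^sub>R (a - b) + ((1/h) *\<^sub>R (a - c) - (1/h) *\<^sub>R (b - 0))
        = (1/h) *\<^sub>R ((E - 1) *\<^sub>R (a - b) + ((a - c) - b))"
      by (simp add: scaleR_add_right scaleR_diff_right)
    also have "(E - 1) *\<^sub>R (a - b) + ((a - c) - b) = E *\<^sub>R (a - b) - c"
      by (simp add: algebra_simps)
    finally show ?thesis
      using partial_laplace_shift[of h t] that t
      by (simp add: E_def a_def b_def c_def partial_laplace_def)
  qed
  have limit: "l *\<^sub>R (?F t - ?F 0) + (exp (- l * t) *\<^sub>R G t x - exp (- l * 0) *\<^sub>R G 0 x)
      = l *\<^sub>R ?F t - x + exp (- l * t) *\<^sub>R G t x"
    using c0_groupD(1)[OF group] by (simp add: partial_laplace_def)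
  have lim: "((\<lambda>h. ((exp (l * h) - 1) / h) *\<^sub>R (?F (t + h) - ?F (0 + h))
      + ((1/h) *\<^sub>R (?F (t + h) - ?F t) - (1/h) *\<^sub>R (?F (0 + h) - ?F 0))) \<longlongrightarrow>
      l *\<^sub>R ?F t - x + exp (- l * t) *\<^sub>R G t x) (at_right 0)"
    unfolding limit[symmetric] using t
    by (intro tendsto_intros exp_right_quotient_tendsto partial_laplace_continuous_right
        partial_laplace_right_quotient) auto
  have "((\<lambda>h. (1/h) *\<^sub>R (G h (?F t) - ?F t))
      \<longlongrightarrow> l *\<^sub>R ?F t - x + exp (- l * t) *\<^sub>R G t x) (at_right 0)"
    by (rule Lim_transform_eventually[OF lim], rule eventually_mono[OF eventually_at_right_less])
      (simp add: split)
  then show "?F t \<in> D" "A (?F t) = l *\<^sub>R ?F t - x + exp (- l * t) *\<^sub>R G t x"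
    using generatorI by blast+
qed

lemma domain_dense: "closure D = UNIV"
proof -
  have "x \<in> closure D" for x
  proof -
    have "((\<lambda>h. (1/h) *\<^sub>R (partial_laplace G 0 x (0 + h) - partial_laplace G 0 x 0)) \<longlongrightarrow> x) (at_right 0)"
      using partial_laplace_right_quotient[of 0 0 x] c0_groupD(1)[OF group] by simp
    then have "((\<lambda>h. (1/h) *\<^sub>R partial_laplace G 0 x h) \<longlongrightarrow> x) (at_right 0)"
      by (simp add: partial_laplace_def)
    moreover have "\<forall>\<^sub>F h in at_right 0. (1/h) *\<^sub>R partial_laplace G 0 x h \<in> closure D"
      by (rule eventually_mono[OF eventually_at_right_less])
        (use partial_laplace_in_domain(1) domain_scaleR(1) closure_subset in blast)
    ultimately show ?thesis
      by (intro Lim_in_closed_set[OF closed_closure]) auto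
  qed
  then show ?thesis by auto
qed

lemma partial_laplace_diff:
  "partial_laplace G l v t - partial_laplace G l w t = partial_laplace G l (v - w) t"
proof -
  have "integral {0..t} (\<lambda>s. exp (- l * s) *\<^sub>R G s v - exp (- l * s) *\<^sub>R G s w)
      = partial_laplace G l v t - partial_laplace G l w t"
    unfolding partial_laplace_def by (rule integral_diff) (rule laplace_integrand_integrable)+
  then show ?thesis
    by (simp add: partial_laplace_def blinfun.diff_right scaleR_diff_right)
qed

lemma norm_partial_laplace_le:
  assumes "0 \<le> l" "0 \<le> t" and M: "\<forall>s\<in>{0..t}. norm (G s) \<le> M"
  shows "norm (partial_laplace G l v t) \<le> M * norm v * t"
proof -
  have bound: "norm (exp (- l * s) *\<^sub>R G s v) \<le> M * norm v" if s: "s \<in> {0..t} - {}" for s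
  proof -
    have "exp (- l * s) \<le> 1" using s assms by simp
    moreover have "norm (G s v) \<le> M * norm v"
      using M s norm_blinfun[of "G s" v] by (meson DiffD1 mult_right_mono norm_ge_zero order_trans)
    ultimately show ?thesis
      by (simp add: mult_le_one mult_mono' order_trans[OF mult_left_le_one_le])
  qed
  have "0 \<le> M * norm v"
    using M assms by (metis atLeastAtMost_iff mult_nonneg_nonneg norm_ge_zero order_refl order_trans)
  from has_integral_bound_real[OF this finite.emptyI
      integrable_integral[OF laplace_integrand_integrable[of l v 0 t]] bound]
  show ?thesis using assms by (simp add: partial_laplace_def)
qed

\<comment> \<open>For a fixed point v of the map below, x = F(t) with F = partial_laplace G l v solves
  l x - A x - K x = y, by the formula for A F(t).\<close>
lemma perturbed_resolvent_solution:
  fixes K :: "'a \<Rightarrow>\<^sub>L 'a"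
  assumes t: "0 < t" and l: "0 \<le> l" and M: "\<forall>s\<in>{0..t}. norm (G s) \<le> M"
    and small: "exp (- l * t) * M + norm K * (M * t) \<le> 1/2"
  shows "\<exists>x\<in>D. l *\<^sub>R x - A x - K x = y"
proof -
  let ?J = "\<lambda>v. partial_laplace G l v t"
  define \<Phi> where "\<Phi> v = y + exp (- l * t) *\<^sub>R G t v + K (?J v)" for v
  have "\<exists>!v. \<Phi> v = v"
  proof (rule banach_fix_type[of "1/2"])
    show "\<forall>v w. dist (\<Phi> v) (\<Phi> w) \<le> 1/2 * dist v w"
    proof (intro allI)
      fix v w
      have "\<Phi> v - \<Phi> w = exp (- l * t) *\<^sub>R G t (v - w) + K (?J (v - w))"
        by (simp add: \<Phi>_def partial_laplace_diff[symmetric] blinfun.diff_right scaleR_diff_right)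
      then have "dist (\<Phi> v) (\<Phi> w) \<le> norm (exp (- l * t) *\<^sub>R G t (v - w)) + norm (K (?J (v - w)))"
        unfolding dist_norm by (metis norm_triangle_ineq)
      also have "norm (exp (- l * t) *\<^sub>R G t (v - w)) \<le> exp (- l * t) * (M * norm (v - w))"
        using M t norm_blinfun[of "G t" "v - w"]
        by (simp add: mult_left_mono order_trans[OF _ mult_right_mono])
      also have "norm (K (?J (v - w))) \<le> norm K * (M * norm (v - w) * t)"
        using norm_blinfun[of K "?J (v - w)"] norm_partial_laplace_le[OF l _ M, of "v - w"] t
        by (meson less_imp_le mult_left_mono norm_ge_zero order_trans)
      also have "exp (- l * t) * (M * norm (v - w)) + norm K * (M * norm (v - w) * t)
          = (exp (- l * t) * M + norm K * (M * t)) * norm (v - w)"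
        by (simp add: algebra_simps)
      also have "\<dots> \<le> 1/2 * norm (v - w)"
        using small by (intro mult_right_mono) auto
      finally show "dist (\<Phi> v) (\<Phi> w) \<le> 1/2 * dist v w" by (simp add: dist_norm)
    qed
  qed auto
  then obtain v where v: "\<Phi> v = v" by blast
  have cancel: "d - b - c = a" if "a + b + c = d" for a b c d :: 'a
    using that by (simp add: algebra_simps)
  have "l *\<^sub>R ?J v - A (?J v) - K (?J v) = v - exp (- l * t) *\<^sub>R G t v - K (?J v)"
    by (simp add: partial_laplace_in_domain(2)[OF t])
  also have "\<dots> = y"
    by (rule cancel[OF v[unfolded \<Phi>_def]])
  finally show ?thesis
    using partial_laplace_in_domain(1)[OF t] by blast
qed

lemma surj_perturbed_resolvent:
  fixes K :: "'a \<Rightarrow>\<^sub>L 'a"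
  shows "\<exists>l0. \<forall>l\<ge>l0. \<forall>y. \<exists>x\<in>D. l *\<^sub>R x - A x - K x = y"
proof -
  obtain M0 where M0: "\<forall>t\<in>{0..1}. norm (G t) \<le> M0"
    using c0_group_bounded_on_interval[OF group] by blast
  define M where "M = max M0 1"
  have M: "\<forall>t\<in>{0..1}. norm (G t) \<le> M" "M > 0"
    using M0 by (auto simp: M_def intro: max.coboundedI1)
  define t where "t = min 1 (1 / (4 * (norm K + 1) * M))"
  have c: "4 * (norm K + 1) * M > 0" using M by (simp add: add_nonneg_pos)
  then have t: "0 < t" "t \<le> 1" by (auto simp: t_def)
  have "t \<le> 1 / (4 * (norm K + 1) * M)" by (simp add: t_def)
  then have "(4 * (norm K + 1) * M) * t \<le> 1" using c by (simp add: le_divide_eq mult.commute)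
  then have "(norm K + 1) * M * t \<le> 1/4" by (simp add: algebra_simps)
  moreover have "norm K * (M * t) \<le> (norm K + 1) * M * t"
    using M t by (simp add: algebra_simps)
  ultimately have small_K: "norm K * (M * t) \<le> 1/4" by linarith
  have "\<exists>x\<in>D. l *\<^sub>R x - A x - K x = y" if l: "l \<ge> max 0 (ln (4 * M) / t)" for l y
  proof (rule perturbed_resolvent_solution[OF t(1)])
    show "0 \<le> l" using l by simp
    show "\<forall>s\<in>{0..t}. norm (G s) \<le> M" using M t by auto
    have "ln (4 * M) / t \<le> l" using l by simp
    then have "ln (4 * M) \<le> l * t" using t by (simp add: pos_divide_le_eq)
    then have "4 * M \<le> exp (l * t)"
      using M by (metis exp_ln exp_le_cancel_iff mult_pos_pos zero_less_numeral)
    then have "exp (- l * t) * M \<le> 1/4" by (simp add: exp_minus field_simps)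
    then show "exp (- l * t) * M + norm K * (M * t) \<le> 1/2" using small_K by simp
  qed
  then show ?thesis by blast
qed

end

section \<open>Transfer to complete normed spaces\<close>

text \<open>The integration lemmas used above require the sort banach, which a type variable of sort
  real_normed_vector and complete_space does not have; an isometric copy of such a type is an
  instance of banach, and the results are transported back along the copy.\<close>

typedef 'a banach_copy = "UNIV :: 'a set" morphisms from_copy to_copy by simp

setup_lifting type_definition_banach_copy

instantiation banach_copy :: (real_normed_vector) real_normed_vector
begin
lift_definition zero_banach_copy :: "'a banach_copy" is 0 .
lift_definition plus_banach_copy :: "'a banach_copy \<Rightarrow> 'a banach_copy \<Rightarrow> 'a banach_copy" is "(+)" .
lift_definition minus_banach_copy :: "'a banach_copy \<Rightarrow> 'a banach_copy \<Rightarrow> 'a banach_copy" is "(-)" .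
lift_definition uminus_banach_copy :: "'a banach_copy \<Rightarrow> 'a banach_copy" is uminus .
lift_definition scaleR_banach_copy :: "real \<Rightarrow> 'a banach_copy \<Rightarrow> 'a banach_copy" is scaleR .
lift_definition norm_banach_copy :: "'a banach_copy \<Rightarrow> real" is norm .
lift_definition sgn_banach_copy :: "'a banach_copy \<Rightarrow> 'a banach_copy" is sgn .
lift_definition dist_banach_copy :: "'a banach_copy \<Rightarrow> 'a banach_copy \<Rightarrow> real" is dist .
definition uniformity_banach_copy :: "('a banach_copy \<times> 'a banach_copy) filter"
  where "uniformity_banach_copy = (INF e\<in>{0<..}. principal {(x, y). dist x y < e})"
definition open_banach_copy :: "'a banach_copy set \<Rightarrow> bool"
  where "open_banach_copy U = (\<forall>x\<in>U. \<forall>\<^sub>F (x', y) in uniformity. x' = x \<longrightarrow> y \<in> U)"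
instance
proof
  fix x y z :: "'a banach_copy" and a b :: real
  show "x + y + z = x + (y + z)" by transfer (simp add: algebra_simps)
  show "x + y = y + x" by transfer (simp add: algebra_simps)
  show "0 + x = x" by transfer simp
  show "- x + x = 0" by transfer simp
  show "x - y = x + - y" by transfer simp
  show "a *\<^sub>R (x + y) = a *\<^sub>R x + a *\<^sub>R y" by transfer (simp add: scaleR_add_right)
  show "(a + b) *\<^sub>R x = a *\<^sub>R x + b *\<^sub>R x" by transfer (simp add: scaleR_add_left)
  show "a *\<^sub>R b *\<^sub>R x = (a * b) *\<^sub>R x" by transfer simp
  show "1 *\<^sub>R x = x" by transfer simp
  show "dist x y = norm (x - y)" by transfer (simp add: dist_norm)
  show "sgn x = inverse (norm x) *\<^sub>R x" by transfer (simp add: sgn_div_norm)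
  show "(norm x = 0) = (x = 0)" by transfer simp
  show "norm (x + y) \<le> norm x + norm y" by transfer (rule norm_triangle_ineq)
  show "norm (a *\<^sub>R x) = \<bar>a\<bar> * norm x" by transfer simp
qed (simp_all add: uniformity_banach_copy_def open_banach_copy_def)
end

lemma from_copy_to_copy [simp]: "from_copy (to_copy x) = x"
  by (simp add: to_copy_inverse)

lemma to_copy_from_copy [simp]: "to_copy (from_copy v) = v"
  by (rule from_copy_inverse)

lemma to_copy_add: "to_copy (x + y) = to_copy x + to_copy y"
  by (simp add: from_copy_inject[symmetric] plus_banach_copy.rep_eq)

lemma to_copy_scaleR: "to_copy (c *\<^sub>R x) = c *\<^sub>R to_copy x"
  by (simp add: from_copy_inject[symmetric] scaleR_banach_copy.rep_eq)

lemma to_copy_diff: "to_copy (x - y) = to_copy x - to_copy y"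
  by (simp add: from_copy_inject[symmetric] minus_banach_copy.rep_eq)

lemma from_copy_linear:
  "from_copy (x + y) = from_copy x + from_copy y" "from_copy (x - y) = from_copy x - from_copy y"
  "from_copy (c *\<^sub>R x) = c *\<^sub>R from_copy x"
  by (simp_all add: plus_banach_copy.rep_eq minus_banach_copy.rep_eq scaleR_banach_copy.rep_eq)

lemma dist_to_copy: "dist (to_copy x) (to_copy y) = dist x y"
  by (simp add: dist_banach_copy.rep_eq)

instance banach_copy :: ("{real_normed_vector,complete_space}") banach
proof
  fix X :: "nat \<Rightarrow> 'a banach_copy"
  assume "Cauchy X"
  then have "Cauchy (\<lambda>n. from_copy (X n))"
    unfolding Cauchy_def by (simp add: dist_banach_copy.rep_eq)
  then obtain L where "(\<lambda>n. from_copy (X n)) \<longlonglongrightarrow> L"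
    using Cauchy_convergent_iff convergent_def by blast
  then have "X \<longlonglongrightarrow> to_copy L"
    unfolding tendsto_iff by (simp add: dist_banach_copy.rep_eq)
  then show "convergent X" by (auto simp: convergent_def)
qed

lemma tendsto_to_copy_iff: "((\<lambda>h. to_copy (f h)) \<longlongrightarrow> to_copy l) F \<longleftrightarrow> (f \<longlongrightarrow> l) F"
  unfolding tendsto_iff by (simp add: dist_to_copy)

definition copy_op :: "('a::real_normed_vector \<Rightarrow>\<^sub>L 'a) \<Rightarrow> ('a banach_copy \<Rightarrow>\<^sub>L 'a banach_copy)"
  where "copy_op T = Blinfun (\<lambda>v. to_copy (T (from_copy v)))"

lemma copy_op_apply [simp]: "copy_op T v = to_copy (T (from_copy v))"
proof -
  have "bounded_linear (\<lambda>v. to_copy (T (from_copy v)))"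
  proof (rule bounded_linear_intro[of _ "norm T"])
    show "to_copy (T (from_copy (v + w))) = to_copy (T (from_copy v)) + to_copy (T (from_copy w))" for v w
      by (simp add: from_copy_linear blinfun.add_right to_copy_add)
    show "to_copy (T (from_copy (r *\<^sub>R v))) = r *\<^sub>R to_copy (T (from_copy v))" for r v
      by (simp add: from_copy_linear blinfun.scaleR_right to_copy_scaleR)
    show "norm (to_copy (T (from_copy v))) \<le> norm v * norm T" for v
      using norm_blinfun[of T "from_copy v"] by (simp add: norm_banach_copy.rep_eq mult.commute)
  qed
  then show ?thesis by (simp add: copy_op_def bounded_linear_Blinfun_apply)
qed

lemma c0_group_copy:
  assumes "c0_group G"
  shows "c0_group (\<lambda>t. copy_op (G t))"
  unfolding c0_group_def
proof (intro conjI allI)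
  show "copy_op (G 0) = id_blinfun" "copy_op (G (s + t)) = copy_op (G s) o\<^sub>L copy_op (G t)" for s t
    using c0_groupD[OF assms] by (auto intro!: blinfun_eqI)
  have "bounded_linear (to_copy :: 'a \<Rightarrow> 'a banach_copy)"
    by (rule bounded_linear_intro[of _ 1]) (simp_all add: to_copy_add to_copy_scaleR norm_banach_copy.rep_eq)
  then show "continuous_on UNIV (\<lambda>t. copy_op (G t) v)" for v
    using continuous_on_compose[OF c0_groupD(3)[OF assms, of "from_copy v"] linear_continuous_on]
    by (simp add: o_def)
qed

lemma is_generator_copy:
  assumes "is_generator G D A"
  shows "is_generator (\<lambda>t. copy_op (G t)) (to_copy ` D) (\<lambda>v. to_copy (A (from_copy v)))"
proof -
  have quotient: "(1/h) *\<^sub>R (copy_op (G h) v - v) = to_copy ((1/h) *\<^sub>R (G h (from_copy v) - from_copy v))"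
    for h v by (simp add: to_copy_scaleR to_copy_diff)
  have domain: "v \<in> to_copy ` D \<longleftrightarrow> from_copy v \<in> D" for v
    by (metis to_copy_from_copy from_copy_to_copy image_iff)
  have tendsto: "((\<lambda>h. (1/h) *\<^sub>R (copy_op (G h) v - v)) \<longlongrightarrow> y) (at_right 0) \<longleftrightarrow>
      ((\<lambda>h. (1/h) *\<^sub>R (G h (from_copy v) - from_copy v)) \<longlongrightarrow> from_copy y) (at_right 0)" for v y
    unfolding quotient using tendsto_to_copy_iff[of _ "from_copy y"] by simp
  show ?thesis
    unfolding is_generator_def tendsto using assms
    by (auto simp: is_generator_def domain set_eq_iff) (metis from_copy_to_copy)
qed

lemma is_generator_dense_and_perturbed_surj:
  fixes G :: "real \<Rightarrow> ('a::{real_normed_vector,complete_space} \<Rightarrow>\<^sub>L 'a)" and K :: "'a \<Rightarrow>\<^sub>L 'a"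
  assumes "c0_group G" "is_generator G D A"
  shows "closure D = UNIV" "\<exists>l0. \<forall>l\<ge>l0. \<forall>y. \<exists>x\<in>D. l *\<^sub>R x - A x - K x = y"
proof -
  interpret copy: banach_c0_generator "\<lambda>t. copy_op (G t)" "to_copy ` D" "\<lambda>v. to_copy (A (from_copy v))"
    using c0_group_copy is_generator_copy assms by unfold_locales
  show "closure D = UNIV"
  proof -
    have "x \<in> closure D" for x
      unfolding closure_approachable
    proof (intro allI impI)
      fix e :: real assume "e > 0"
      then obtain y where "y \<in> D" "dist (to_copy y) (to_copy x) < e"
        using copy.domain_dense closure_approachable[of "to_copy x" "to_copy ` D"] by auto
      then show "\<exists>y\<in>D. dist y x < e" by (auto simp: dist_to_copy)
    qed
    then show ?thesis by auto
  qed
  obtain l0 where l0: "\<forall>l\<ge>l0. \<forall>y. \<exists>x\<in>to_copy ` D. l *\<^sub>R x - to_copy (A (from_copy x)) - copy_op K x = y"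
    using copy.surj_perturbed_resolvent by blast
  have "\<exists>x\<in>D. l *\<^sub>R x - A x - K x = y" if "l \<ge> l0" for l y
  proof -
    from l0 that obtain w where "w \<in> to_copy ` D"
      "l *\<^sub>R w - to_copy (A (from_copy w)) - copy_op K w = to_copy y" by blast
    then obtain x where "x \<in> D" "l *\<^sub>R to_copy x - to_copy (A x) - to_copy (K x) = to_copy y"
      by auto
    then show ?thesis
      by (metis from_copy_to_copy to_copy_diff to_copy_scaleR)
  qed
  then show "\<exists>l0. \<forall>l\<ge>l0. \<forall>y. \<exists>x\<in>D. l *\<^sub>R x - A x - K x = y" by blast
qed

lemma is_generator_perturbed_surj_reverse:
  fixes G :: "real \<Rightarrow> ('a::{real_normed_vector,complete_space} \<Rightarrow>\<^sub>L 'a)" and K :: "'a \<Rightarrow>\<^sub>L 'a"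
  assumes "c0_group G" "is_generator G D A"
  shows "\<exists>l0. \<forall>l\<ge>l0. \<forall>y. \<exists>x\<in>D. l *\<^sub>R x + A x - K x = y"
proof -
  have "c0_group (\<lambda>t. G (- t))" "is_generator (\<lambda>t. G (- t)) D (\<lambda>x. - A x)"
    using c0_group_reverse is_generator_reverse assms by blast+
  from is_generator_dense_and_perturbed_surj(2)[OF this] show ?thesis by simp
qed

section \<open>Operators on real Hilbert spaces\<close>

lemma inner_eq_on_dense_imp_eq:
  fixes z1 z2 :: "'a::real_inner"
  assumes "closure D = UNIV" and "\<And>x. x \<in> D \<Longrightarrow> inner x z1 = inner x z2"
  shows "z1 = z2"
proof -
  have "closed {x. inner x (z1 - z2) = 0}"
    by (intro closed_Collect_eq continuous_intros)
  moreover have "D \<subseteq> {x. inner x (z1 - z2) = 0}"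
    using assms(2) by (auto simp: inner_diff_right)
  ultimately have "closure D \<subseteq> {x. inner x (z1 - z2) = 0}"
    by (rule closure_minimal[rotated])
  then have "z1 - z2 \<in> {x. inner x (z1 - z2) = 0}" using assms(1) by (metis UNIV_I subsetD)
  then show ?thesis by simp
qed

lemma norm_diff_squared_le_of_midpoint:
  fixes x y :: "'a::real_inner"
  assumes "d \<le> norm ((1/2) *\<^sub>R (x + y))" and "0 \<le> d"
  shows "norm (x - y)^2 \<le> 2 * norm x^2 + 2 * norm y^2 - 4 * d^2"
proof -
  have "(2 * d)^2 \<le> norm (x + y)^2" using assms by (intro power_mono) auto
  moreover have "norm (x - y)^2 + norm (x + y)^2 = 2 * norm x^2 + 2 * norm y^2"
    by (simp add: power2_norm_eq_inner inner_diff_left inner_diff_right inner_add_left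
        inner_add_right inner_commute)
  ultimately show ?thesis by (simp add: power_mult_distrib)
qed

lemma minimizing_sequence_Cauchy:
  fixes xs :: "nat \<Rightarrow> 'a::real_inner"
  assumes midpoint: "\<And>x y. x \<in> H \<Longrightarrow> y \<in> H \<Longrightarrow> (1/2) *\<^sub>R (x + y) \<in> H"
    and lower: "\<And>x. x \<in> H \<Longrightarrow> d \<le> norm x" and d: "0 \<le> d"
    and xs: "\<And>n. xs n \<in> H" and upper: "\<And>n. norm (xs n) < d + 1 / Suc n"
  shows "Cauchy xs"
proof (rule metric_CauchyI)
  fix e :: real assume "e > 0"
  define \<delta> where "\<delta> = min 1 (e^2 / (8 * (2 * d + 1)))"
  have \<delta>: "0 < \<delta>" "\<delta> \<le> 1" using \<open>e > 0\<close> d by (auto simp: \<delta>_def)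
  have "4 * (2 * d + 1) * \<delta> \<le> 4 * (2 * d + 1) * (e^2 / (8 * (2 * d + 1)))"
    using d by (intro mult_left_mono) (auto simp: \<delta>_def)
  also have "\<dots> = e^2 / 2" using d by (simp add: field_simps)
  also have "\<dots> < e^2" using \<open>e > 0\<close> by simp
  finally have \<delta>_small: "4 * (2 * d + 1) * \<delta> < e^2" .
  obtain N where N: "1 / Suc N < \<delta>" using \<delta>(1) by (metis nat_approx_posE)
  have "dist (xs m) (xs n) < e" if "m \<ge> N" "n \<ge> N" for m n
  proof -
    define a b where "a = 1 / real (Suc m)" and "b = 1 / real (Suc n)"
    have "a \<le> 1 / Suc N" "b \<le> 1 / Suc N" using that by (auto simp: a_def b_def frac_le)
    then have ab: "0 \<le> a" "a < \<delta>" "0 \<le> b" "b < \<delta>" using N by (auto simp: a_def b_def)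
    have "norm (xs m)^2 \<le> (d + a)^2" "norm (xs n)^2 \<le> (d + b)^2"
      using upper[of m] upper[of n] by (auto simp: a_def b_def intro!: power_mono)
    moreover have "norm (xs m - xs n)^2 \<le> 2 * norm (xs m)^2 + 2 * norm (xs n)^2 - 4 * d^2"
      by (intro norm_diff_squared_le_of_midpoint lower midpoint xs d)
    moreover have "a^2 \<le> \<delta>" "b^2 \<le> \<delta>"
      using ab \<delta>(2) mult_mono[of a 1 a \<delta>] mult_mono[of b 1 b \<delta>] by (auto simp: power2_eq_square)
    moreover have "d * a \<le> d * \<delta>" "d * b \<le> d * \<delta>" using ab d by (auto intro: mult_left_mono)
    ultimately have "norm (xs m - xs n)^2 < e^2"
      using \<delta>_small by (simp add: power2_eq_square algebra_simps)
    then show ?thesis using \<open>e > 0\<close> by (simp add: dist_norm power_less_imp_less_base)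
  qed
  then show "\<exists>N. \<forall>m\<ge>N. \<forall>n\<ge>N. dist (xs m) (xs n) < e" by blast
qed

lemma min_norm_point_exists:
  fixes H :: "'a::{real_inner,complete_space} set"
  assumes "closed H" and "x1 \<in> H"
    and midpoint: "\<And>x y. x \<in> H \<Longrightarrow> y \<in> H \<Longrightarrow> (1/2) *\<^sub>R (x + y) \<in> H"
  shows "\<exists>z\<in>H. \<forall>x\<in>H. norm z \<le> norm x"
proof -
  define d where "d = Inf (norm ` H)"
  have lower: "d \<le> norm x" if "x \<in> H" for x
    unfolding d_def using that by (intro cInf_lower bdd_belowI[of _ 0]) auto
  have d: "0 \<le> d" unfolding d_def using assms(2) by (intro cInf_greatest) auto
  have "\<exists>x\<in>H. norm x < d + 1 / Suc n" for n
  proof -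
    have "Inf (norm ` H) < d + 1 / Suc n" by (simp add: d_def)
    then show ?thesis using cInf_lessD[of "norm ` H"] assms(2) by blast
  qed
  then obtain xs where xs: "\<And>n. xs n \<in> H" and upper: "\<And>n. norm (xs n) < d + 1 / Suc n"
    by metis
  have "Cauchy xs" by (rule minimizing_sequence_Cauchy[OF midpoint lower d xs upper])
  then obtain z where z: "xs \<longlonglongrightarrow> z" using Cauchy_convergent_iff convergent_def by blast
  then have "z \<in> H" using assms(1) xs closed_sequentially by blast
  moreover have "norm z \<le> d"
  proof (rule tendsto_le[OF trivial_limit_sequentially _ tendsto_norm[OF z]])
    show "(\<lambda>n. d + 1 / Suc n) \<longlonglongrightarrow> d"
      using tendsto_add[OF tendsto_const LIMSEQ_Suc[OF lim_const_over_n[of 1]], of d] by simp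
    show "\<forall>\<^sub>F n in sequentially. norm (xs n) \<le> d + 1 / Suc n" using upper by (simp add: less_imp_le)
  qed
  ultimately show ?thesis using lower by (meson order_trans)
qed

lemma orthogonal_of_min_norm:
  fixes z v :: "'a::real_inner"
  assumes min: "\<And>t. norm z \<le> norm (z + t *\<^sub>R v)"
  shows "inner z v = 0"
proof (rule ccontr)
  assume ne: "inner z v \<noteq> 0"
  define c q where "c = inner z v" and "q = inner v v + 1"
  have q: "q > 0" by (simp add: q_def add_nonneg_pos)
  define t where "t = - c / q"
  have "norm z ^ 2 \<le> norm (z + t *\<^sub>R v) ^ 2" using min by (simp add: power_mono)
  moreover have "norm (z + t *\<^sub>R v) ^ 2 = norm z ^ 2 + 2 * t * c + t^2 * inner v v"
    unfolding power2_norm_eq_inner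
    by (simp add: inner_add_left inner_add_right inner_commute c_def power2_eq_square algebra_simps)
  moreover have "2 * t * c + t^2 * inner v v = c^2 * (inner v v - 2 * q) / q^2"
    using q by (simp add: t_def power2_eq_square field_simps)
  moreover have "c^2 * (inner v v - 2 * q) / q^2 < 0"
    using q ne by (intro divide_neg_pos mult_pos_neg) (auto simp: c_def q_def)
  ultimately show False by linarith
qed

theorem riesz_representation:
  fixes f :: "'a::{real_inner,complete_space} \<Rightarrow> real"
  assumes "bounded_linear f"
  shows "\<exists>y. \<forall>x. f x = inner x y"
proof (cases "\<forall>x. f x = 0")
  case True then show ?thesis by (intro exI[of _ 0]) simp
next
  case False
  interpret f: bounded_linear f by (rule assms)
  obtain x1 where "f x1 \<noteq> 0" using False by blast
  define H where "H = {x. f x = 1}"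
  have "closed H"
    unfolding H_def by (rule closed_Collect_eq[OF linear_continuous_on[OF assms] continuous_on_const])
  moreover have "(1 / f x1) *\<^sub>R x1 \<in> H" using \<open>f x1 \<noteq> 0\<close> by (simp add: H_def f.scaleR)
  moreover have "(1/2) *\<^sub>R (x + y) \<in> H" if "x \<in> H" "y \<in> H" for x y
    using that by (simp add: H_def f.scaleR f.add)
  ultimately have "\<exists>z\<in>H. \<forall>x\<in>H. norm z \<le> norm x" by (rule min_norm_point_exists)
  then obtain z where z: "z \<in> H" "\<And>x. x \<in> H \<Longrightarrow> norm z \<le> norm x" by blast
  have "f x = inner x ((1 / inner z z) *\<^sub>R z)" for x
  proof -
    have "f (z + t *\<^sub>R (x - f x *\<^sub>R z)) = 1" for t
      using z(1) by (simp add: H_def f.add f.scaleR f.diff)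
    then have "inner z (x - f x *\<^sub>R z) = 0"
      using z(2) by (intro orthogonal_of_min_norm) (simp add: H_def)
    then have "inner x z = f x * inner z z" by (simp add: inner_diff_right inner_commute)
    moreover have "z \<noteq> 0" using z(1) f.zero by (auto simp: H_def)
    ultimately show ?thesis by simp
  qed
  then show ?thesis by blast
qed

lemma badjoint_exists:
  fixes S :: "'a::{real_inner,complete_space} \<Rightarrow>\<^sub>L 'b::real_inner"
  shows "\<exists>Sa. is_badjoint S Sa"
proof -
  have "\<exists>z. \<forall>x. inner (S x) y = inner x z" for y
    using bounded_linear_compose[OF bounded_linear_inner_left blinfun.bounded_linear_right[of S]]
    by (intro riesz_representation) (simp add: o_def)
  then obtain Sa where Sa: "\<And>x y. inner (S x) y = inner x (Sa y)" by metis
  have "bounded_linear Sa"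
  proof (rule bounded_linear_intro[of _ "norm S"])
    show "Sa (y1 + y2) = Sa y1 + Sa y2" for y1 y2
      by (subst vector_eq_ldot[symmetric]) (simp add: Sa[symmetric] inner_add_right)
    show "Sa (r *\<^sub>R y) = r *\<^sub>R Sa y" for r y
      by (subst vector_eq_ldot[symmetric]) (simp add: Sa[symmetric])
    show "norm (Sa y) \<le> norm y * norm S" for y
    proof -
      have "norm (Sa y) ^ 2 = inner (S (Sa y)) y" by (simp add: Sa power2_norm_eq_inner)
      also have "\<dots> \<le> norm (S (Sa y)) * norm y" by (rule norm_cauchy_schwarz)
      also have "\<dots> \<le> norm S * norm (Sa y) * norm y" by (simp add: mult_right_mono norm_blinfun)
      finally have "norm (Sa y) * norm (Sa y) \<le> (norm S * norm y) * norm (Sa y)"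
        by (simp add: power2_eq_square algebra_simps)
      then show ?thesis by (cases "norm (Sa y) = 0") (auto simp: mult.commute)
    qed
  qed
  then show ?thesis
    by (intro exI[of _ "Blinfun Sa"]) (simp add: is_badjoint_def bounded_linear_Blinfun_apply Sa)
qed

lemma binverse_apply:
  assumes "is_binverse S Si"
  shows "Si (S x) = x" "S (Si x) = x"
  using assms by (metis blinfun_apply_blinfun_compose blinfun_apply_id_blinfun is_binverse_def)+

lemma selfadjoint_inner: "selfadjoint_op S \<Longrightarrow> inner (S x) y = inner x (S y)"
  by (simp add: selfadjoint_op_def is_badjoint_def)

lemma selfadjoint_binverse:
  assumes "is_binverse S Si" "selfadjoint_op S"
  shows "selfadjoint_op Si"
proof -
  have "inner (Si u) v = inner u (Si v)" for u v
  proof -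
    have "inner (Si u) v = inner (Si u) (S (Si v))" by (simp add: binverse_apply[OF assms(1)])
    also have "\<dots> = inner (S (Si u)) (Si v)" by (simp add: selfadjoint_inner[OF assms(2)])
    finally show ?thesis by (simp add: binverse_apply[OF assms(1)])
  qed
  then show ?thesis by (simp add: selfadjoint_op_def is_badjoint_def)
qed

lemma nonneg_cauchy_schwarz:
  fixes S :: "'a::real_inner \<Rightarrow>\<^sub>L 'a"
  assumes sa: "selfadjoint_op S" and nn: "nonneg_op S"
  shows "(inner (S x) y)^2 \<le> inner (S x) x * inner (S y) y"
proof -
  define a b c where "a = inner (S x) x" and "b = inner (S x) y" and "c = inner (S y) y"
  have q: "0 \<le> a + 2 * t * b + t^2 * c" for t
  proof -
    have "0 \<le> inner (S (x + t *\<^sub>R y)) (x + t *\<^sub>R y)" using nn by (simp add: nonneg_op_def)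
    also have "\<dots> = a + 2 * t * b + t^2 * c"
      using selfadjoint_inner[OF sa, of y x]
      by (simp add: blinfun.add_right blinfun.scaleR_right inner_add_left inner_add_right
          a_def b_def c_def power2_eq_square inner_commute algebra_simps)
    finally show ?thesis .
  qed
  have "c \<ge> 0" using nn by (simp add: nonneg_op_def c_def)
  show ?thesis
  proof (cases "c = 0")
    case True
    have "b = 0"
    proof (rule ccontr)
      assume "b \<noteq> 0"
      with q[of "- (a + 1) / (2 * b)"] True show False by (simp add: field_simps)
    qed
    then show ?thesis
      unfolding a_def[symmetric] b_def[symmetric] c_def[symmetric] using True by simp
  next
    case False
    with \<open>c \<ge> 0\<close> have "c > 0" by simp
    then have "b^2 \<le> a * c" using q[of "- b / c"] by (simp add: power2_eq_square field_simps)
    then show ?thesis by (simp add: a_def b_def c_def)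
  qed
qed

\<comment> \<open>The Cauchy-Schwarz inequality for the form of S, applied to x and S x.\<close>
lemma nonneg_norm_apply_squared_le:
  fixes S :: "'a::real_inner \<Rightarrow>\<^sub>L 'a"
  assumes sa: "selfadjoint_op S" and nn: "nonneg_op S"
  shows "(norm (S x))^2 \<le> inner (S x) x * norm S"
proof (cases "S x = 0")
  case False
  have Sx: "inner (S x) x \<ge> 0" using nn by (simp add: nonneg_op_def)
  have "(norm (S x))^2 * (norm (S x))^2 = (inner (S x) (S x))^2"
    unfolding power2_norm_eq_inner by (simp add: power2_eq_square)
  also have "\<dots> \<le> inner (S x) x * inner (S (S x)) (S x)"
    by (rule nonneg_cauchy_schwarz[OF sa nn])
  also have "\<dots> \<le> inner (S x) x * (norm S * (norm (S x))^2)"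
  proof -
    have "inner (S (S x)) (S x) \<le> norm S * norm (S x) * norm (S x)"
      by (rule order_trans[OF norm_cauchy_schwarz mult_right_mono[OF norm_blinfun norm_ge_zero]])
    then show ?thesis using Sx by (intro mult_left_mono) (simp_all add: power2_eq_square mult.assoc)
  qed
  finally have "(norm (S x))^2 * (norm (S x))^2 \<le> (inner (S x) x * norm S) * (norm (S x))^2"
    by (simp add: mult_ac)
  moreover have "(norm (S x))^2 > 0" using False by simp
  ultimately show ?thesis by (rule mult_right_le_imp_le)
qed (use nn in \<open>simp add: nonneg_op_def\<close>)

lemma nonneg_binvertible_coercive:
  fixes S :: "'a::real_inner \<Rightarrow>\<^sub>L 'a"
  assumes sa: "selfadjoint_op S" and nn: "nonneg_op S" and inv: "binvertible S"
  shows "\<exists>c>0. \<forall>x. c * (norm x)^2 \<le> inner (S x) x"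
proof -
  obtain Si where Si: "is_binverse S Si" using inv by (auto simp: binvertible_def)
  define K where "K = (norm Si)^2 * norm S + 1"
  have K: "K > 0" by (simp add: K_def add_nonneg_pos)
  have "(norm x)^2 \<le> K * inner (S x) x" for x
  proof -
    have Sx: "inner (S x) x \<ge> 0" using nn by (simp add: nonneg_op_def)
    have "norm x \<le> norm Si * norm (S x)"
      using norm_blinfun[of Si "S x"] by (simp add: binverse_apply[OF Si])
    then have "(norm x)^2 \<le> (norm Si)^2 * (norm (S x))^2"
      by (metis norm_ge_zero power_mono power_mult_distrib)
    also have "\<dots> \<le> (norm Si)^2 * (inner (S x) x * norm S)"
      by (intro mult_left_mono nonneg_norm_apply_squared_le[OF sa nn]) simp
    also have "\<dots> \<le> K * inner (S x) x"
      using Sx by (simp add: K_def algebra_simps)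
    finally show ?thesis .
  qed
  then show ?thesis using K by (intro exI[of _ "1/K"]) (simp add: field_simps)
qed

lemma coercive_damped_contraction:
  fixes S :: "'a::real_inner \<Rightarrow>\<^sub>L 'a"
  assumes c: "c > 0" and co: "\<And>x. c * (norm x)^2 \<le> inner (S x) x"
  shows "\<exists>t>0. \<exists>k<1. 0 \<le> k \<and> (\<forall>u. norm (u - t *\<^sub>R S u) \<le> k * norm u)"
proof -
  define t where "t = c / ((norm S)^2 + c^2)"
  have den: "(norm S)^2 + c^2 > 0" using c by (simp add: add_nonneg_pos)
  have t: "t > 0" using c den by (simp add: t_def)
  have "t * c = c^2 / ((norm S)^2 + c^2)" by (simp add: t_def power2_eq_square)
  then have tc: "t * c \<le> 1" "t * c > 0" using den c by simp_all
  have "t^2 * (norm S)^2 \<le> t^2 * ((norm S)^2 + c^2)" by (simp add: mult_left_mono)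
  also have "\<dots> = t * c" using den by (simp add: t_def power2_eq_square)
  finally have tS: "t^2 * (norm S)^2 \<le> t * c" .
  define k where "k = sqrt (1 - t * c)"
  have k: "0 \<le> k" "k < 1" using tc by (auto simp: k_def)
  have "norm (u - t *\<^sub>R S u) \<le> k * norm u" for u
  proof -
    have "(norm (u - t *\<^sub>R S u))^2 = (norm u)^2 - 2 * t * inner (S u) u + t^2 * (norm (S u))^2"
      unfolding power2_norm_eq_inner
      by (simp add: inner_diff_left inner_diff_right inner_commute power2_eq_square algebra_simps)
    also have "\<dots> \<le> (norm u)^2 - 2 * t * (c * (norm u)^2) + t^2 * ((norm S)^2 * (norm u)^2)"
    proof -
      have "t * (c * (norm u)^2) \<le> t * inner (S u) u" using co[of u] t by (simp add: mult_left_mono)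
      moreover have "(norm (S u))^2 \<le> (norm S)^2 * (norm u)^2"
        using norm_blinfun[of S u] by (metis norm_ge_zero power_mono power_mult_distrib)
      then have "t^2 * (norm (S u))^2 \<le> t^2 * ((norm S)^2 * (norm u)^2)" by (simp add: mult_left_mono)
      ultimately show ?thesis by linarith
    qed
    also have "\<dots> \<le> (norm u)^2 * (1 - t * c)"
      using mult_left_mono[OF tS, of "(norm u)^2"] by (simp add: algebra_simps)
    also have "\<dots> = (k * norm u)^2" using tc by (simp add: k_def power_mult_distrib)
    finally show ?thesis using k by (metis mult_nonneg_nonneg norm_ge_zero power2_le_imp_le)
  qed
  then show ?thesis using t k by blast
qed

lemma coercive_surj:
  fixes S :: "'a::{real_inner,complete_space} \<Rightarrow>\<^sub>L 'a"
  assumes c: "c > 0" and co: "\<And>x. c * (norm x)^2 \<le> inner (S x) x"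
  shows "\<exists>x. S x = y"
proof -
  obtain t k where t: "t > 0" and k: "0 \<le> k" "k < 1"
    and contr: "\<And>u. norm (u - t *\<^sub>R S u) \<le> k * norm u"
    using coercive_damped_contraction[OF c co] by blast
  have "dist (v - t *\<^sub>R (S v - y)) (w - t *\<^sub>R (S w - y)) \<le> k * dist v w" for v w
  proof -
    have "(v - t *\<^sub>R (S v - y)) - (w - t *\<^sub>R (S w - y)) = (v - w) - t *\<^sub>R S (v - w)"
      by (simp add: blinfun.diff_right algebra_simps)
    then show ?thesis unfolding dist_norm by (metis contr)
  qed
  then have "\<exists>!v. v - t *\<^sub>R (S v - y) = v" using k by (intro banach_fix_type[of k]) auto
  then show ?thesis using t by auto
qed

theorem coercive_binvertible:
  fixes S :: "'a::{real_inner,complete_space} \<Rightarrow>\<^sub>L 'a"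
  assumes c: "c > 0" and co: "\<And>x. c * (norm x)^2 \<le> inner (S x) x"
  shows "\<exists>Si. is_binverse S Si"
proof -
  have lower: "c * norm x \<le> norm (S x)" for x
  proof (cases "x = 0")
    case False
    have "c * norm x * norm x \<le> norm (S x) * norm x"
      using co[of x] norm_cauchy_schwarz[of "S x" x] by (simp add: power2_eq_square)
    then show ?thesis using False by simp
  qed simp
  have inj: "x = y" if "S x = S y" for x y
    using lower[of "x - y"] that c by (simp add: blinfun.diff_right mult_le_0_iff)
  obtain Si where SSi: "\<And>y. S (Si y) = y" using coercive_surj[OF c co] by metis
  have "bounded_linear Si"
  proof (rule bounded_linear_intro[of _ "1/c"])
    show "Si (y1 + y2) = Si y1 + Si y2" for y1 y2 by (rule inj) (simp add: SSi blinfun.add_right)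
    show "Si (r *\<^sub>R y) = r *\<^sub>R Si y" for r y by (rule inj) (simp add: SSi blinfun.scaleR_right)
    show "norm (Si y) \<le> norm y * (1/c)" for y using lower[of "Si y"] c by (simp add: SSi field_simps)
  qed
  moreover have "Si (S x) = x" for x by (rule inj) (simp add: SSi)
  ultimately show ?thesis
    by (intro exI[of _ "Blinfun Si"])
      (auto simp: is_binverse_def bounded_linear_Blinfun_apply SSi intro!: blinfun_eqI)
qed

section \<open>Operators intertwined by an invertible operator\<close>

text \<open>Weak form of \<Delta> A1 + A2^* \<Delta> = 0 on D.\<close>

definition adjoint_intertwined :: "'a::real_inner set \<Rightarrow> ('a \<Rightarrow>\<^sub>L 'a) \<Rightarrow> ('a \<Rightarrow> 'a) \<Rightarrow> ('a \<Rightarrow> 'a) \<Rightarrow> bool"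
  where "adjoint_intertwined D \<Delta> A1 A2 \<longleftrightarrow>
    (\<forall>x\<in>D. \<forall>y\<in>D. inner (\<Delta> (A1 x)) y + inner (\<Delta> x) (A2 y) = 0)"

lemma adjoint_intertwinedD:
  "adjoint_intertwined D \<Delta> A1 A2 \<Longrightarrow> x \<in> D \<Longrightarrow> y \<in> D \<Longrightarrow> inner (\<Delta> (A1 x)) y + inner (\<Delta> x) (A2 y) = 0"
  by (simp add: adjoint_intertwined_def)

lemma adjoint_intertwined_swap:
  assumes "selfadjoint_op \<Delta>" "adjoint_intertwined D \<Delta> A1 A2"
  shows "adjoint_intertwined D \<Delta> A2 A1"
  using assms unfolding adjoint_intertwined_def
  by (metis selfadjoint_inner inner_commute add.commute)

lemma adj_op_eqI:
  assumes "closure D = UNIV" and "\<forall>x\<in>D. inner (A x) y = inner x z"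
  shows "adj_op D A y = z"
proof -
  have "\<forall>x\<in>D. inner (A x) y = inner x (adj_op D A y)"
    unfolding adj_op_def by (rule someI[of _ z]) (rule assms(2))
  then show ?thesis using assms by (intro inner_eq_on_dense_imp_eq[OF assms(1)]) auto
qed

lemma adjoint_intertwined_adj_op:
  assumes "adjoint_intertwined D \<Delta> A1 A2" "closure D = UNIV" "x \<in> D"
  shows "\<Delta> x \<in> adj_dom D A2" "adj_op D A2 (\<Delta> x) = - \<Delta> (A1 x)"
proof -
  have witness: "\<forall>y\<in>D. inner (A2 y) (\<Delta> x) = inner y (- \<Delta> (A1 x))"
    using adjoint_intertwinedD[OF assms(1,3)] by (simp add: inner_commute add_eq_0_iff)
  then show "\<Delta> x \<in> adj_dom D A2" unfolding adj_dom_def by blast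
  show "adj_op D A2 (\<Delta> x) = - \<Delta> (A1 x)" by (rule adj_op_eqI[OF assms(2) witness])
qed

\<comment> \<open>If x solves l x - A1 x = \<Delta>i (l v + z), then \<Delta> x - v is orthogonal to the range of l + A2.\<close>
lemma binverse_maps_adj_dom:
  fixes \<Delta> \<Delta>i :: "'a::real_inner \<Rightarrow>\<^sub>L 'a"
  assumes inv: "is_binverse \<Delta> \<Delta>i" and E: "adjoint_intertwined D \<Delta> A1 A2"
    and surj1: "\<forall>y. \<exists>x\<in>D. l *\<^sub>R x - A1 x = y" and surj2: "\<forall>y. \<exists>x\<in>D. l *\<^sub>R x + A2 x = y"
    and v: "v \<in> adj_dom D A2"
  shows "\<Delta>i v \<in> D"
proof -
  obtain z where z: "\<forall>x\<in>D. inner (A2 x) v = inner x z" using v by (auto simp: adj_dom_def)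
  obtain u where u: "u \<in> D" "l *\<^sub>R u - A1 u = \<Delta>i (l *\<^sub>R v + z)" using surj1 by blast
  have "\<Delta> (l *\<^sub>R u - A1 u) = l *\<^sub>R v + z"
    using u(2) binverse_apply(2)[OF inv] by simp
  then have A1u: "\<Delta> (A1 u) = l *\<^sub>R \<Delta> u - (l *\<^sub>R v + z)"
    by (simp add: blinfun.diff_right blinfun.scaleR_right algebra_simps)
  have orth: "inner (l *\<^sub>R x + A2 x) (\<Delta> u - v) = 0" if x: "x \<in> D" for x
  proof -
    have "inner (\<Delta> (A1 u)) x = l * inner (\<Delta> u) x - l * inner v x - inner z x"
      by (simp add: A1u inner_diff_left inner_add_left)
    then show ?thesis
      using adjoint_intertwinedD[OF E u(1) x] z x
      by (simp add: inner_add_left inner_diff_right inner_commute algebra_simps)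
  qed
  obtain x where "x \<in> D" "l *\<^sub>R x + A2 x = \<Delta> u - v" using surj2 by blast
  with orth have "\<Delta> u = v" by fastforce
  then show ?thesis using u(1) binverse_apply(1)[OF inv] by metis
qed

definition twist :: "('a::real_normed_vector \<Rightarrow>\<^sub>L 'a) \<Rightarrow> 'a \<times> 'a \<Rightarrow> 'a \<times> 'a"
  where "twist \<Delta> u = (\<Delta> (fst u), - \<Delta> (snd u))"

lemma bounded_linear_twist: "bounded_linear (twist \<Delta>)"
  unfolding twist_def
  by (intro bounded_linear_Pair bounded_linear_minus
      bounded_linear_compose[OF blinfun.bounded_linear_right bounded_linear_fst]
      bounded_linear_compose[OF blinfun.bounded_linear_right bounded_linear_snd])

lemma twist_uminus: "twist \<Delta> (- u) = - twist \<Delta> u"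
  by (simp add: twist_def blinfun.minus_right)

lemma twist_binverse: "is_binverse \<Delta> \<Delta>i \<Longrightarrow> twist \<Delta>i (twist \<Delta> u) = u \<and> twist \<Delta> (twist \<Delta>i u) = u"
  by (simp add: twist_def binverse_apply blinfun.minus_right)

text \<open>In the complexification X \<times> X, \<Delta> A1 + A2^* \<Delta> = 0 becomes an adjoint relation between
  -\<lambda> - A1 and \<lambda> - A2, with \<Delta> replaced by the twisted operator (x, y) \<mapsto> (\<Delta> x, -\<Delta> y).\<close>

lemma cshift_adjoint_intertwined:
  assumes E: "adjoint_intertwined D \<Delta> A1 A2" and "w \<in> D \<times> D" "u \<in> D \<times> D"
  shows "inner (cshift_op A2 l w) (twist \<Delta> u) = - inner w (twist \<Delta> (cshift_op A1 (- l) u))"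
proof -
  obtain w1 w2 u1 u2 where wu: "w = (w1, w2)" "u = (u1, u2)" "w1 \<in> D" "w2 \<in> D" "u1 \<in> D" "u2 \<in> D"
    using assms by auto
  show ?thesis
    using adjoint_intertwinedD[OF E wu(5,3)] adjoint_intertwinedD[OF E wu(6,4)]
    unfolding wu cshift_op_def twist_def
    by (simp add: inner_diff_left inner_diff_right inner_add_left inner_add_right blinfun.diff_right
        blinfun.add_right blinfun.scaleR_right blinfun.minus_right inner_commute algebra_simps)
qed

locale adjoint_intertwining =
  fixes D :: "'a::{real_inner,complete_space} set" and \<Delta> \<Delta>i :: "'a \<Rightarrow>\<^sub>L 'a" and A1 A2 :: "'a \<Rightarrow> 'a"
  assumes inverse: "is_binverse \<Delta> \<Delta>i"
    and intertwined: "adjoint_intertwined D \<Delta> A1 A2"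
    and dense: "closure D = UNIV"
    and zero_in_domain: "0 \<in> D" and uminus_in_domain: "\<And>x. x \<in> D \<Longrightarrow> - x \<in> D"
    and A2_zero: "A2 0 = 0"
    and adj_dom_into_domain: "\<And>v. v \<in> adj_dom D A2 \<Longrightarrow> \<Delta>i v \<in> D"
begin

lemma twisted_adjoint_in_domain:
  assumes v: "\<forall>w\<in>D \<times> D. inner (cshift_op A2 l w) v = inner w u"
  shows "twist \<Delta>i v \<in> D \<times> D"
proof -
  obtain v1 v2 u1 u2 where vu: "v = (v1, v2)" "u = (u1, u2)" by fastforce
  have "inner (cshift_op A2 l (x, 0)) v = inner (x, 0) u" "inner (cshift_op A2 l (0, x)) v = inner (0, x) u"
    if "x \<in> D" for x
    using v that zero_in_domain by blast+
  then have "inner (A2 x) v1 = inner x (Re l *\<^sub>R v1 + Im l *\<^sub>R v2 - u1)"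
    "inner (A2 x) v2 = inner x (- Im l *\<^sub>R v1 + Re l *\<^sub>R v2 - u2)" if "x \<in> D" for x
    using that unfolding vu
    by (simp_all add: cshift_op_def A2_zero inner_diff_left inner_diff_right inner_add_right algebra_simps)
  then have "v1 \<in> adj_dom D A2" "v2 \<in> adj_dom D A2"
    unfolding adj_dom_def by blast+
  then show ?thesis
    by (simp add: vu twist_def uminus_in_domain adj_dom_into_domain)
qed

\<comment> \<open>If R inverts l - A2, this inverts -l - A1: it is -\<Delta>^{-1} R^* \<Delta> with \<Delta> twisted.\<close>
definition mirrored_resolvent :: "(('a \<times> 'a) \<Rightarrow>\<^sub>L ('a \<times> 'a)) \<Rightarrow> 'a \<times> 'a \<Rightarrow> 'a \<times> 'a"
  where "mirrored_resolvent Ra z = - twist \<Delta>i (Ra (twist \<Delta> z))"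

lemma bounded_linear_mirrored_resolvent:
  fixes Ra :: "('a \<times> 'a) \<Rightarrow>\<^sub>L ('a \<times> 'a)"
  shows "bounded_linear (mirrored_resolvent Ra)"
  unfolding mirrored_resolvent_def[abs_def]
  by (rule bounded_linear_minus[OF bounded_linear_compose[OF bounded_linear_twist
        bounded_linear_compose[OF blinfun.bounded_linear_right bounded_linear_twist]]])

lemma twist_mirrored_resolvent:
  fixes Ra :: "('a \<times> 'a) \<Rightarrow>\<^sub>L ('a \<times> 'a)"
  shows "twist \<Delta> (mirrored_resolvent Ra z) = - Ra (twist \<Delta> z)"
  using twist_binverse[OF inverse] by (simp add: mirrored_resolvent_def twist_uminus)

lemma mirrored_resolvent_left_inverse:
  fixes Ra :: "('a \<times> 'a) \<Rightarrow>\<^sub>L ('a \<times> 'a)"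
  assumes R_right: "\<And>z. R z \<in> D \<times> D" "\<And>z. cshift_op A2 l (R z) = z"
    and Ra: "\<And>x y. inner (R x) y = inner x (Ra y)" and u: "u \<in> D \<times> D"
  shows "mirrored_resolvent Ra (cshift_op A1 (- l) u) = u"
proof -
  have "Ra (twist \<Delta> (cshift_op A1 (- l) u)) = - twist \<Delta> u"
  proof (subst vector_eq_ldot[symmetric], intro allI)
    fix y
    have "inner y (Ra (twist \<Delta> (cshift_op A1 (- l) u))) = inner (R y) (twist \<Delta> (cshift_op A1 (- l) u))"
      by (simp add: Ra)
    also have "\<dots> = - inner (cshift_op A2 l (R y)) (twist \<Delta> u)"
      using cshift_adjoint_intertwined[OF intertwined R_right(1)[of y] u, where l = l] by simp
    finally show "inner y (Ra (twist \<Delta> (cshift_op A1 (- l) u))) = inner y (- twist \<Delta> u)"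
      by (simp add: R_right(2))
  qed
  then show ?thesis using twist_binverse[OF inverse] by (simp add: mirrored_resolvent_def twist_uminus)
qed

lemma mirrored_resolvent_right_inverse:
  fixes Ra :: "('a \<times> 'a) \<Rightarrow>\<^sub>L ('a \<times> 'a)"
  assumes R_left: "\<And>w. w \<in> D \<times> D \<Longrightarrow> R (cshift_op A2 l w) = w"
    and Ra: "\<And>x y. inner (R x) y = inner x (Ra y)"
  shows "mirrored_resolvent Ra z \<in> D \<times> D" "cshift_op A1 (- l) (mirrored_resolvent Ra z) = z"
proof -
  have Ra_adjoint: "inner (cshift_op A2 l w) (Ra (twist \<Delta> z)) = inner w (twist \<Delta> z)"
    if "w \<in> D \<times> D" for w
    using R_left[OF that] by (simp add: Ra[symmetric])
  have "twist \<Delta>i (Ra (twist \<Delta> z)) \<in> D \<times> D"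
    by (rule twisted_adjoint_in_domain) (use Ra_adjoint in blast)
  then show domain: "mirrored_resolvent Ra z \<in> D \<times> D"
    unfolding mirrored_resolvent_def by (auto simp: mem_Times_iff intro: uminus_in_domain)
  have "twist \<Delta> (cshift_op A1 (- l) (mirrored_resolvent Ra z)) = twist \<Delta> z"
  proof (rule inner_eq_on_dense_imp_eq[of "D \<times> D"])
    show "closure (D \<times> D) = UNIV" by (simp add: closure_Times dense)
    fix w assume w: "w \<in> D \<times> D"
    have "inner w (twist \<Delta> (cshift_op A1 (- l) (mirrored_resolvent Ra z)))
        = - inner (cshift_op A2 l w) (twist \<Delta> (mirrored_resolvent Ra z))"
      using cshift_adjoint_intertwined[OF intertwined w domain] by simp
    also have "\<dots> = inner w (twist \<Delta> z)"
      using Ra_adjoint[OF w] by (simp add: twist_mirrored_resolvent)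
    finally show "inner w (twist \<Delta> (cshift_op A1 (- l) (mirrored_resolvent Ra z))) = inner w (twist \<Delta> z)" .
  qed
  then have "twist \<Delta>i (twist \<Delta> (cshift_op A1 (- l) (mirrored_resolvent Ra z))) = twist \<Delta>i (twist \<Delta> z)"
    by simp
  then show "cshift_op A1 (- l) (mirrored_resolvent Ra z) = z"
    using twist_binverse[OF inverse] by simp
qed

lemma in_resolvent_uminus:
  assumes "in_resolvent D A2 l"
  shows "in_resolvent D A1 (- l)"
proof -
  obtain R :: "('a \<times> 'a) \<Rightarrow>\<^sub>L ('a \<times> 'a)"
    where R_right: "\<And>z. R z \<in> D \<times> D" "\<And>z. cshift_op A2 l (R z) = z"
      and R_left: "\<And>w. w \<in> D \<times> D \<Longrightarrow> R (cshift_op A2 l w) = w"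
    using assms unfolding in_resolvent_def by blast
  obtain Ra :: "('a \<times> 'a) \<Rightarrow>\<^sub>L ('a \<times> 'a)" where Ra: "\<And>x y. inner (R x) y = inner x (Ra y)"
    using badjoint_exists[of R] unfolding is_badjoint_def by blast
  show ?thesis
    unfolding in_resolvent_def
    using mirrored_resolvent_left_inverse[OF R_right Ra] mirrored_resolvent_right_inverse[OF R_left Ra]
    by (intro exI[of _ "Blinfun (mirrored_resolvent Ra)"])
      (simp add: bounded_linear_Blinfun_apply bounded_linear_mirrored_resolvent)
qed

end

section \<open>Diagonalisation of the Hamiltonian\<close>

lemma Tmat_Tinv_mat:
  assumes inv: "is_binverse (P - N) Di"
  shows "Tinv_mat Di N P (Tmat N P z) = z" "Tmat N P (Tinv_mat Di N P z) = z"
proof -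
  have Di_left: "Di (P v) - Di (N v) = v" for v
    using binverse_apply(1)[OF inv, of v] by (simp add: blinfun.diff_left blinfun.diff_right)
  have Di_right: "P (Di v) - N (Di v) = v" for v
    using binverse_apply(2)[OF inv, of v] by (simp add: blinfun.diff_left)
  have "N (Di (P v)) = N v + N (Di (N v))" for v
    using arg_cong[OF Di_left[of v], of N] by (simp add: blinfun.diff_right algebra_simps)
  moreover have "P (Di (N v)) = N v + N (Di (N v))" for v
    using Di_right[of "N v"] by (simp add: algebra_simps)
  ultimately show "Tinv_mat Di N P (Tmat N P z) = z" "Tmat N P (Tinv_mat Di N P z) = z"
    using Di_left Di_right
    by (auto simp: Tinv_mat_def Tmat_def blinfun.add_right blinfun.diff_right blinfun.minus_right
        algebra_simps prod_eq_iff)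
qed

locale riccati_pair = c0_generator G D A
  for G :: "real \<Rightarrow> ('x::{real_inner,complete_space} \<Rightarrow>\<^sub>L 'x)" and D A +
  fixes B :: "'u::real_inner \<Rightarrow>\<^sub>L 'x" and Bs :: "'x \<Rightarrow>\<^sub>L 'u" and Ri :: "'u \<Rightarrow>\<^sub>L 'u"
    and Q P N :: "'x \<Rightarrow>\<^sub>L 'x"
  assumes B_adjoint: "is_badjoint B Bs" and Ri_selfadjoint: "selfadjoint_op Ri"
    and P_selfadjoint: "selfadjoint_op P" and P_nonneg: "nonneg_op P" and P_binvertible: "binvertible P"
    and P_riccati: "riccati_sol D A B Bs Ri Q P"
    and N_selfadjoint: "selfadjoint_op N" and N_nonpos: "nonpos_op N"
    and N_riccati: "riccati_sol D A B Bs Ri Q N"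
begin

abbreviation BRB :: "'x \<Rightarrow>\<^sub>L 'x" where "BRB \<equiv> B o\<^sub>L (Ri o\<^sub>L Bs)"

abbreviation A_minus :: "'x \<Rightarrow> 'x" where "A_minus \<equiv> closed_loop A B Bs Ri P"

abbreviation A_plus :: "'x \<Rightarrow> 'x" where "A_plus \<equiv> closed_loop A B Bs Ri N"

abbreviation \<Delta> :: "'x \<Rightarrow>\<^sub>L 'x" where "\<Delta> \<equiv> P - N"

lemma closed_loop_apply: "closed_loop A B Bs Ri Y x = A x - BRB (Y x)"
  by (simp add: closed_loop_def)

lemma BRB_symmetric: "inner (BRB u) v = inner u (BRB v)"
proof -
  have adj: "inner (B w) v = inner w (Bs v)" for w v
    using B_adjoint by (simp add: is_badjoint_def)
  have "inner (BRB u) v = inner (Ri (Bs u)) (Bs v)" by (simp add: adj)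
  also have "\<dots> = inner (Bs u) (Ri (Bs v))" by (rule selfadjoint_inner[OF Ri_selfadjoint])
  also have "\<dots> = inner u (BRB v)" using adj[of "Ri (Bs v)" u] by (simp add: inner_commute)
  finally show ?thesis .
qed

lemma riccati_solD:
  assumes "riccati_sol D A B Bs Ri Q Y" "x \<in> D" "y \<in> D"
  shows "inner (Y (A x)) y + inner (Y x) (A y) - inner (Y (BRB (Y x))) y = - inner (Q x) y"
  using assms by (simp add: riccati_sol_def)

definition riccati_adjoint :: "('x \<Rightarrow>\<^sub>L 'x) \<Rightarrow> 'x \<Rightarrow> 'x"
  where "riccati_adjoint Y x = - Q x - Y (A x) + Y (BRB (Y x))"

lemma riccati_adjoint_witness:
  assumes "riccati_sol D A B Bs Ri Q Y" "x \<in> D" "y \<in> D"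
  shows "inner (A y) (Y x) = inner y (riccati_adjoint Y x)"
  using riccati_solD[OF assms]
  by (simp add: riccati_adjoint_def inner_add_right inner_diff_right inner_commute algebra_simps)

lemma Delta_apply: "\<Delta> x = P x - N x"
  by (simp add: blinfun.diff_left)

lemma Delta_selfadjoint: "selfadjoint_op \<Delta>"
  using selfadjoint_inner[OF P_selfadjoint] selfadjoint_inner[OF N_selfadjoint]
  by (simp add: selfadjoint_op_def is_badjoint_def Delta_apply inner_diff_left inner_diff_right)

lemma Delta_coercive: "\<exists>c>0. \<forall>x. c * (norm x)^2 \<le> inner (\<Delta> x) x"
proof -
  obtain c where c: "c > 0" "\<And>x. c * (norm x)^2 \<le> inner (P x) x"
    using nonneg_binvertible_coercive[OF P_selfadjoint P_nonneg P_binvertible] by blast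
  have "c * (norm x)^2 \<le> inner (\<Delta> x) x" for x
  proof -
    have "inner (N x) x \<le> 0" using N_nonpos by (simp add: nonpos_op_def)
    then show ?thesis using c(2)[of x] by (simp add: Delta_apply inner_diff_left)
  qed
  then show ?thesis using c(1) by blast
qed

lemma Delta_posdef: "posdef_op \<Delta>"
  using Delta_coercive unfolding posdef_op_def
  by (metis mult_pos_pos order_less_le_trans zero_less_norm_iff zero_less_power)

lemma Delta_binvertible: "\<exists>Di. is_binverse \<Delta> Di"
  using Delta_coercive coercive_binvertible by blast

\<comment> \<open>The difference of the two Riccati equations; the quadratic terms recombine because BRB is
  symmetric.\<close>
lemma Delta_intertwined: "adjoint_intertwined D \<Delta> A_minus A_plus"
  unfolding adjoint_intertwined_def
proof (intro ballI)
  fix x y assume xy: "x \<in> D" "y \<in> D"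
  have "inner (N (BRB (N x))) y = inner (N x) (BRB (N y))"
    "inner (N (BRB (P x))) y = inner (P x) (BRB (N y))"
    by (rule trans[OF selfadjoint_inner[OF N_selfadjoint] BRB_symmetric])+
  then show "inner (\<Delta> (A_minus x)) y + inner (\<Delta> x) (A_plus y) = 0"
    using riccati_solD[OF P_riccati xy] riccati_solD[OF N_riccati xy]
    by (simp add: Delta_apply closed_loop_apply blinfun.diff_right inner_diff_left inner_diff_right)
qed

lemma closed_loop_zero: "closed_loop A B Bs Ri Y 0 = 0"
  by (simp add: closed_loop_apply zero_in_domain)

lemma domain_dense: "closure D = UNIV"
  by (rule is_generator_dense_and_perturbed_surj(1)[OF group generator])

lemma closed_loop_perturbed_surj:
  "\<exists>l0. \<forall>l\<ge>l0. \<forall>y. \<exists>x\<in>D. l *\<^sub>R x - closed_loop A B Bs Ri Y x = y"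
  "\<exists>l0. \<forall>l\<ge>l0. \<forall>y. \<exists>x\<in>D. l *\<^sub>R x + closed_loop A B Bs Ri Y x = y"
proof -
  have eq: "l *\<^sub>R x - closed_loop A B Bs Ri Y x = l *\<^sub>R x - A x - (- (BRB o\<^sub>L Y)) x"
    "l *\<^sub>R x + closed_loop A B Bs Ri Y x = l *\<^sub>R x + A x - (BRB o\<^sub>L Y) x" for l x
    by (simp_all add: closed_loop_apply blinfun.minus_left)
  show "\<exists>l0. \<forall>l\<ge>l0. \<forall>y. \<exists>x\<in>D. l *\<^sub>R x - closed_loop A B Bs Ri Y x = y"
    unfolding eq by (rule is_generator_dense_and_perturbed_surj(2)[OF group generator])
  show "\<exists>l0. \<forall>l\<ge>l0. \<forall>y. \<exists>x\<in>D. l *\<^sub>R x + closed_loop A B Bs Ri Y x = y"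
    unfolding eq by (rule is_generator_perturbed_surj_reverse[OF group generator])
qed

lemma Delta_inverse_maps_adj_dom:
  assumes inv: "is_binverse \<Delta> Di"
  shows "v \<in> adj_dom D A_plus \<Longrightarrow> Di v \<in> D" "v \<in> adj_dom D A_minus \<Longrightarrow> Di v \<in> D"
proof -
  obtain l1 where l1: "\<forall>l\<ge>l1. \<forall>y. \<exists>x\<in>D. l *\<^sub>R x - A_minus x = y"
    using closed_loop_perturbed_surj(1) by blast
  obtain l2 where l2: "\<forall>l\<ge>l2. \<forall>y. \<exists>x\<in>D. l *\<^sub>R x + A_plus x = y"
    using closed_loop_perturbed_surj(2) by blast
  obtain l3 where l3: "\<forall>l\<ge>l3. \<forall>y. \<exists>x\<in>D. l *\<^sub>R x - A_plus x = y"
    using closed_loop_perturbed_surj(1) by blast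
  obtain l4 where l4: "\<forall>l\<ge>l4. \<forall>y. \<exists>x\<in>D. l *\<^sub>R x + A_minus x = y"
    using closed_loop_perturbed_surj(2) by blast
  define l where "l = max (max l1 l2) (max l3 l4)"
  have "\<forall>y. \<exists>x\<in>D. l *\<^sub>R x - A_minus x = y" "\<forall>y. \<exists>x\<in>D. l *\<^sub>R x + A_plus x = y"
    "\<forall>y. \<exists>x\<in>D. l *\<^sub>R x - A_plus x = y" "\<forall>y. \<exists>x\<in>D. l *\<^sub>R x + A_minus x = y"
    using l1 l2 l3 l4 by (simp_all add: l_def)
  then show "v \<in> adj_dom D A_plus \<Longrightarrow> Di v \<in> D" "v \<in> adj_dom D A_minus \<Longrightarrow> Di v \<in> D"
    using binverse_maps_adj_dom[OF inv Delta_intertwined]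
      binverse_maps_adj_dom[OF inv adjoint_intertwined_swap[OF Delta_selfadjoint Delta_intertwined]]
    by blast+
qed

lemma Tmat_in_hamiltonian_dom_iff:
  assumes inv: "is_binverse \<Delta> Di"
  shows "Tmat N P (a, b) \<in> hamiltonian_dom D A \<longleftrightarrow> a \<in> D \<and> b \<in> D"
proof
  assume ab: "a \<in> D \<and> b \<in> D"
  then have "\<forall>x\<in>D. inner (A x) (- N a - P b) = inner x (- riccati_adjoint N a - riccati_adjoint P b)"
    using riccati_adjoint_witness[OF N_riccati] riccati_adjoint_witness[OF P_riccati]
    by (simp add: inner_diff_right)
  then show "Tmat N P (a, b) \<in> hamiltonian_dom D A"
    using domain_add(1) ab by (auto simp: Tmat_def hamiltonian_dom_def adj_dom_def)
next
  assume "Tmat N P (a, b) \<in> hamiltonian_dom D A"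
  then have ab: "a + b \<in> D" and "- N a - P b \<in> adj_dom D A"
    by (auto simp: Tmat_def hamiltonian_dom_def)
  then obtain z where z: "\<forall>x\<in>D. inner (A x) (- N a - P b) = inner x z" by (auto simp: adj_dom_def)
  \<comment> \<open>\<Delta> a lies in the domain of A_plus^*, hence a = \<Delta>^{-1} \<Delta> a \<in> D.\<close>
  have Delta_a: "\<Delta> a = (- N a - P b) + P (a + b)" by (simp add: Delta_apply blinfun.add_right)
  have "inner (A_plus x) (\<Delta> a) = inner x (z + riccati_adjoint P (a + b) - N (BRB (\<Delta> a)))"
    if x: "x \<in> D" for x
  proof -
    have "inner (A x) (\<Delta> a) = inner (A x) (- N a - P b) + inner (A x) (P (a + b))"
      unfolding Delta_a by (rule inner_add_right)
    also have "\<dots> = inner x z + inner x (riccati_adjoint P (a + b))"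
      by (simp only: bspec[OF z x] riccati_adjoint_witness[OF P_riccati ab x])
    finally have "inner (A x) (\<Delta> a) = inner x (z + riccati_adjoint P (a + b))"
      by (simp add: inner_add_right)
    moreover have "inner (BRB (N x)) (\<Delta> a) = inner x (N (BRB (\<Delta> a)))"
      by (rule trans[OF BRB_symmetric selfadjoint_inner[OF N_selfadjoint]])
    ultimately show ?thesis
      by (simp only: closed_loop_apply inner_diff_left inner_diff_right)
  qed
  then have "\<Delta> a \<in> adj_dom D A_plus" unfolding adj_dom_def by blast
  then have "Di (\<Delta> a) \<in> D" by (rule Delta_inverse_maps_adj_dom(1)[OF inv])
  then have "a \<in> D" by (simp add: binverse_apply(1)[OF inv])
  with ab show "a \<in> D \<and> b \<in> D" using domain_diff[of "a + b" a] by simp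
qed

lemma hamiltonian_Tmat:
  assumes inv: "is_binverse \<Delta> Di" and "a \<in> D" "b \<in> D"
  shows "Tinv_mat Di N P (hamiltonian D A B Bs Ri Q (Tmat N P (a, b))) = (A_plus a, A_minus b)"
proof -
  have "adj_op D A (- N a - P b) = - riccati_adjoint N a - riccati_adjoint P b"
    using riccati_adjoint_witness[OF N_riccati assms(2)] riccati_adjoint_witness[OF P_riccati assms(3)]
    by (intro adj_op_eqI[OF domain_dense]) (simp add: inner_diff_right)
  then have "hamiltonian D A B Bs Ri Q (Tmat N P (a, b)) = Tmat N P (A_plus a, A_minus b)"
    by (simp add: hamiltonian_def Tmat_def domain_add(2)[OF assms(2,3)] closed_loop_apply riccati_adjoint_def
        blinfun.add_right blinfun.diff_right blinfun.minus_right algebra_simps)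
  then show ?thesis using Tmat_Tinv_mat[OF inv] by simp
qed

lemma spectrum_A_minus:
  assumes inv: "is_binverse \<Delta> Di"
  shows "op_spectrum D A_minus = uminus ` op_spectrum D A_plus"
proof -
  interpret plus_to_minus: adjoint_intertwining D \<Delta> Di A_minus A_plus
    using inv Delta_intertwined domain_dense zero_in_domain domain_uminus closed_loop_zero
      Delta_inverse_maps_adj_dom(1)[OF inv] by unfold_locales
  interpret minus_to_plus: adjoint_intertwining D \<Delta> Di A_plus A_minus
    using inv adjoint_intertwined_swap[OF Delta_selfadjoint Delta_intertwined] domain_dense
      zero_in_domain domain_uminus closed_loop_zero Delta_inverse_maps_adj_dom(2)[OF inv]
    by unfold_locales
  have "in_resolvent D A_minus m \<longleftrightarrow> in_resolvent D A_plus (- m)" for m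
    using plus_to_minus.in_resolvent_uminus[of "- m"] minus_to_plus.in_resolvent_uminus[of m] by auto
  moreover have "m \<in> uminus ` S \<longleftrightarrow> - m \<in> S" for m :: complex and S
    by (metis image_eqI imageE minus_minus)
  ultimately show ?thesis by (auto simp: op_spectrum_def)
qed

end

theorem mainTheorem4:
  fixes G :: "real \<Rightarrow> ('x::{real_inner,complete_space} \<Rightarrow>\<^sub>L 'x)"
    and D :: "'x set" and A :: "'x \<Rightarrow> 'x"
    and B :: "'u::{real_inner,complete_space} \<Rightarrow>\<^sub>L 'x" and Bs :: "'x \<Rightarrow>\<^sub>L 'u"
    and Q :: "'x \<Rightarrow>\<^sub>L 'x" and R Ri :: "'u \<Rightarrow>\<^sub>L 'u"
    and P N :: "'x \<Rightarrow>\<^sub>L 'x" and T0 :: real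
  assumes group: "c0_group G"
    and gen: "is_generator G D A"
    and Badj: "is_badjoint B Bs"
    and Q_sa: "selfadjoint_op Q" and Q_pd: "posdef_op Q" and Q_inv: "binvertible Q"
    and R_sa: "selfadjoint_op R" and R_pd: "posdef_op R" and R_inv: "is_binverse R Ri"
    and T0_pos: "T0 > 0"
    and ctrl: "\<And>T. T > T0 \<Longrightarrow> exactly_controllable G B T"
    and P_sa: "selfadjoint_op P" and P_nn: "nonneg_op P" and P_ric: "riccati_sol D A B Bs Ri Q P"
    and P_pd: "posdef_op P" and P_inv: "binvertible P"
    and N_sa: "selfadjoint_op N" and N_np: "nonpos_op N" and N_ric: "riccati_sol D A B Bs Ri Q N"
    and N_nd: "negdef_op N" and N_inv: "binvertible N"
  shows "selfadjoint_op (P - N) \<and> posdef_op (P - N) \<and>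
    (\<exists>Di. is_binverse (P - N) Di
       \<and> (\<forall>z. Tinv_mat Di N P (Tmat N P z) = z \<and> Tmat N P (Tinv_mat Di N P z) = z)
       \<and> (\<forall>z. Tmat N P z \<in> hamiltonian_dom D A \<longleftrightarrow> z \<in> D \<times> D)
       \<and> (\<forall>z\<in>D \<times> D. Tinv_mat Di N P (hamiltonian D A B Bs Ri Q (Tmat N P z))
            = (closed_loop A B Bs Ri N (fst z), closed_loop A B Bs Ri P (snd z))))
    \<and> (\<forall>x\<in>D. blinfun_apply (P - N) x \<in> adj_dom D (closed_loop A B Bs Ri N)
         \<and> adj_op D (closed_loop A B Bs Ri N) (blinfun_apply (P - N) x)
            = - blinfun_apply (P - N) (closed_loop A B Bs Ri P x))
    \<and> op_spectrum D (closed_loop A B Bs Ri P) = uminus ` op_spectrum D (closed_loop A B Bs Ri N)"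
proof -
  interpret riccati_pair G D A B Bs Ri Q P N
    using group gen Badj selfadjoint_binverse[OF R_inv R_sa] P_sa P_nn P_inv P_ric N_sa N_np N_ric
    by unfold_locales
  obtain Di where inv: "is_binverse (P - N) Di" using Delta_binvertible by blast
  have "\<forall>z\<in>D \<times> D. Tinv_mat Di N P (hamiltonian D A B Bs Ri Q (Tmat N P z)) = (A_plus (fst z), A_minus (snd z))"
    using hamiltonian_Tmat[OF inv] by auto
  moreover have "\<forall>z. Tmat N P z \<in> hamiltonian_dom D A \<longleftrightarrow> z \<in> D \<times> D"
    using Tmat_in_hamiltonian_dom_iff[OF inv] by (simp add: mem_Times_iff)
  moreover have "\<forall>x\<in>D. \<Delta> x \<in> adj_dom D A_plus \<and> adj_op D A_plus (\<Delta> x) = - \<Delta> (A_minus x)"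
    using adjoint_intertwined_adj_op[OF Delta_intertwined domain_dense] by blast
  ultimately show ?thesis
    using Delta_selfadjoint Delta_posdef inv Tmat_Tinv_mat[OF inv] spectrum_A_minus[OF inv] by blast
qed

end
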